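(* Let $n$ be a positive integer and let $\ell=\ell(n)$ satisfy $\ell=o(n)$. Pick a permutation $\sigma$ uniformly at random from the symmetric group $S_{2^n}$ acting on $\{0,1\}^n$, and let $\pi=\sigma\circ X_1$, where $X_1:\{0,1\}^n\to\{0,1\}^n$ flips the first bit of a string. Let $D_\sigma$ be the distribution on $\{0,1\}^n$ obtained as follows: start with the string $0^n$, then $\ell$ times independently apply either $\sigma$ or $\pi$, each with probability $1/2$, and output the resulting string. Suppose one is given a string $y\in\{0,1\}^n$ which is either drawn from $D_\sigma$ or else drawn uniformly from $\{0,1\}^n$. Then, given $y$ and black-box (quantum) query access to $\sigma$ and $\sigma^{-1}$, no quantum algorithm can determine which of the two cases holds with probability greater than $2/3$ using fewer than $2^{\Omega(\ell)}$ quantum queries to $\sigma$ and $\sigma^{-1}$. Here the success probability is taken over the random choice of $\sigma$, the choice of $y$, and the internal randomness of the algorithm.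
   Context: Query access to a permutation $\tau$ of $\{0,1\}^n$ means access to the unitary oracle $\mathcal{O}_\tau:\lvert x\rangle\lvert z\rangle\mapsto \lvert x\rangle\lvert z\oplus\tau(x)\rangle$ for $x,z\in\{0,1\}^n$, which may be applied in superposition; the algorithm has such access to both $\tau=\sigma$ and $\tau=\sigma^{-1}$, and each application of either oracle counts as one query. *)

theory Defs
  imports "HOL-Analysis.Analysis" "HOL-Library.Landau_Symbols" "HOL-Combinatorics.Permutations"
begin

text \<open>Strings in {0,1}^n are encoded as natural numbers below 2^n (binary
expansion); bitwise XOR is the library operation xor on nat.\<close>

definition strs :: "nat \<Rightarrow> nat set" where
  "strs n = {..<2^n}"

text \<open>X_1: flip the first bit (we take the first bit to be bit position 0).\<close>
definition flip1 :: "nat \<Rightarrow> nat" where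
  "flip1 x = Bit_Operations.xor x 1"

definition walk :: "(nat \<Rightarrow> nat) \<Rightarrow> bool list \<Rightarrow> nat" where
  "walk \<sigma> bs = foldl (\<lambda>x b. if b then \<sigma> x else (\<sigma> \<circ> flip1) x) 0 bs"

text \<open>Quantum register: computational basis states |x,z,w> with x,z in {0,1}^n
(query and answer registers) and w < m (workspace).\<close>
definition qbasis :: "nat \<Rightarrow> nat \<Rightarrow> (nat \<times> nat \<times> nat) set" where
  "qbasis n m = strs n \<times> strs n \<times> {..<m}"

type_synonym qmat = "(nat \<times> nat \<times> nat) \<Rightarrow> (nat \<times> nat \<times> nat) \<Rightarrow> complex"
type_synonym qvec = "(nat \<times> nat \<times> nat) \<Rightarrow> complex"

definition app :: "(nat \<times> nat \<times> nat) set \<Rightarrow> qmat \<Rightarrow> qvec \<Rightarrow> qvec" where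
  "app B U v = (\<lambda>i. \<Sum>j\<in>B. U i j * v j)"

definition is_unitary :: "(nat \<times> nat \<times> nat) set \<Rightarrow> qmat \<Rightarrow> bool" where
  "is_unitary B U \<longleftrightarrow>
     (\<forall>i\<in>B. \<forall>j\<in>B. (\<Sum>k\<in>B. cnj (U k i) * U k j) = (if i = j then 1 else 0))"

definition query_op :: "(nat \<Rightarrow> nat) \<Rightarrow> qmat" where
  "query_op \<tau> = (\<lambda>(x, z, w) (x', z', w').
      if x = x' \<and> w = w' \<and> z = Bit_Operations.xor z' (\<tau> x') then 1 else 0)"

definition ket0 :: qvec where
  "ket0 = (\<lambda>b. if b = (0, 0, 0) then 1 else 0)"

text \<open>A T-query algorithm on input string y (classical input) is given by the
workspace size m, unitaries U y 0, ..., U y T, the choice ch y k of which operator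
(True: sigma^-1, False: sigma) is used at query k+1, and an accepting set of
basis states Acc y for the final computational-basis measurement.\<close>
fun qstate :: "nat \<Rightarrow> nat \<Rightarrow> (nat \<Rightarrow> nat \<Rightarrow> qmat) \<Rightarrow> (nat \<Rightarrow> nat \<Rightarrow> bool)
      \<Rightarrow> (nat \<Rightarrow> nat) \<Rightarrow> nat \<Rightarrow> nat \<Rightarrow> qvec" where
  "qstate n m U ch \<sigma> y 0 = app (qbasis n m) (U y 0) ket0"
| "qstate n m U ch \<sigma> y (Suc k) =
     app (qbasis n m) (U y (Suc k))
       (app (qbasis n m) (query_op (if ch y k then inv \<sigma> else \<sigma>)) (qstate n m U ch \<sigma> y k))"

definition accept_prob :: "nat \<Rightarrow> nat \<Rightarrow> nat \<Rightarrow> (nat \<Rightarrow> nat \<Rightarrow> qmat) \<Rightarrow> (nat \<Rightarrow> nat \<Rightarrow> bool)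
      \<Rightarrow> (nat \<Rightarrow> (nat \<times> nat \<times> nat) set) \<Rightarrow> (nat \<Rightarrow> nat) \<Rightarrow> nat \<Rightarrow> real" where
  "accept_prob n m T U ch Acc \<sigma> y =
     (\<Sum>b\<in>qbasis n m \<inter> Acc y. (cmod (qstate n m U ch \<sigma> y T b))\<^sup>2)"

definition valid_alg :: "nat \<Rightarrow> nat \<Rightarrow> nat \<Rightarrow> (nat \<Rightarrow> nat \<Rightarrow> qmat) \<Rightarrow> bool" where
  "valid_alg n m T U \<longleftrightarrow> (\<forall>y\<in>strs n. \<forall>k\<le>T. is_unitary (qbasis n m) (U y k))"

definition perms :: "nat \<Rightarrow> (nat \<Rightarrow> nat) set" where
  "perms n = {\<sigma>. \<sigma> permutes strs n}"

definition pD :: "nat \<Rightarrow> nat \<Rightarrow> nat \<Rightarrow> nat \<Rightarrow> (nat \<Rightarrow> nat \<Rightarrow> qmat) \<Rightarrow> (nat \<Rightarrow> nat \<Rightarrow> bool)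
      \<Rightarrow> (nat \<Rightarrow> (nat \<times> nat \<times> nat) set) \<Rightarrow> real" where
  "pD n l m T U ch Acc =
     (\<Sum>\<sigma>\<in>perms n. \<Sum>bs\<in>{bs. length bs = l}.
         accept_prob n m T U ch Acc \<sigma> (walk \<sigma> bs))
     / (real (card (perms n)) * 2 ^ l)"

definition pU :: "nat \<Rightarrow> nat \<Rightarrow> nat \<Rightarrow> (nat \<Rightarrow> nat \<Rightarrow> qmat) \<Rightarrow> (nat \<Rightarrow> nat \<Rightarrow> bool)
      \<Rightarrow> (nat \<Rightarrow> (nat \<times> nat \<times> nat) set) \<Rightarrow> real" where
  "pU n m T U ch Acc =
     (\<Sum>\<sigma>\<in>perms n. \<Sum>y\<in>strs n. accept_prob n m T U ch Acc \<sigma> y)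
     / (real (card (perms n)) * 2 ^ n)"

end

theory Submission
  imports Defs
begin

text \<open>Split the l walk bits as a @ b with length a = k \<ge> 1 and length b = K. A sample of
  D_\<sigma> is the walk along b started at \<sigma> u, where u is the last input of the walk along a;
  as walks are bijections, a uniform string is the walk along b started at \<sigma> r for a
  uniform r. Composing \<sigma> with the transposition of u and r exchanges the two situations
  unless one of the walks involved passes through u or r, and by the hybrid argument it changes
  the acceptance probability by at most 4 \<Sigma>_t of the square roots of the query masses at
  u, r, \<sigma> u and \<sigma> r. Unless two short walks collide, which happens with probability
  O(4^l / 2^n) (resample \<sigma> at the first collision), distinct a give distinct u, so the query
  mass at u averages to 2^-k over a, and likewise at r. By Cauchy-Schwarz the advantage is at
  most 16 T sqrt (2^-k + O(4^l / 2^n)) + O(l / 2^n), which is below 1/3 for k = l div 2 and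
  T < 2^(l/8).\<close>

section \<open>Query operators and the hybrid argument\<close>

lemma finite_strs [simp]: "finite (strs n)"
  by (simp add: strs_def)

lemma card_strs [simp]: "card (strs n) = 2 ^ n"
  by (simp add: strs_def)

lemma zero_strs [simp]: "0 \<in> strs n"
  by (simp add: strs_def)

lemma finite_qbasis [simp]: "finite (qbasis n m)"
  by (simp add: qbasis_def)

lemma mem_qbasis_iff: "(x, z, w) \<in> qbasis n m \<longleftrightarrow> x \<in> strs n \<and> z \<in> strs n \<and> w < m"
  by (simp add: qbasis_def)

lemma xor_strs: "x \<in> strs n \<Longrightarrow> y \<in> strs n \<Longrightarrow> Bit_Operations.xor x y \<in> strs n"
proof -
  assume "x \<in> strs n" "y \<in> strs n"
  then have "take_bit n (Bit_Operations.xor x y) = Bit_Operations.xor x y"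
    by (simp add: strs_def take_bit_nat_eq_self)
  then show ?thesis
    by (metis strs_def lessThan_iff take_bit_nat_less_exp)
qed

lemma xor_cancel [simp]: "Bit_Operations.xor (Bit_Operations.xor z c) c = (z::nat)"
  by (simp add: xor.assoc)

lemma xor_eq_iff: "z = Bit_Operations.xor z' c \<longleftrightarrow> z' = Bit_Operations.xor z (c::nat)"
  by (metis xor_cancel)

definition l2norm :: "(nat \<times> nat \<times> nat) set \<Rightarrow> qvec \<Rightarrow> real" where
  "l2norm B v = L2_set (\<lambda>b. cmod (v b)) B"

definition sqnorm :: "(nat \<times> nat \<times> nat) set \<Rightarrow> qvec \<Rightarrow> real" where
  "sqnorm B v = (\<Sum>b\<in>B. (cmod (v b))\<^sup>2)"

lemma l2norm_eq_sqrt_sqnorm: "l2norm B v = sqrt (sqnorm B v)"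
  by (simp add: l2norm_def sqnorm_def L2_set_def)

lemma l2norm_add_le: "l2norm B (\<lambda>b. v b + w b) \<le> l2norm B v + l2norm B w"
proof -
  have "l2norm B (\<lambda>b. v b + w b) \<le> L2_set (\<lambda>b. cmod (v b) + cmod (w b)) B"
    unfolding l2norm_def by (rule L2_set_mono) (auto simp: norm_triangle_ineq)
  also have "\<dots> \<le> l2norm B v + l2norm B w"
    unfolding l2norm_def by (rule L2_set_triangle_ineq)
  finally show ?thesis .
qed

lemma app_diff: "app B U (\<lambda>b. v b - w b) = (\<lambda>b. app B U v b - app B U w b)"
  by (simp add: app_def algebra_simps sum_subtractf)

lemma sqnorm_unitary_app:
  assumes U: "is_unitary B U" and fin: "finite B"
  shows "sqnorm B (app B U v) = sqnorm B v"
proof -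
  have cmod_sq: "complex_of_real ((cmod z)\<^sup>2) = cnj z * z" for z
    by (metis complex_norm_square mult.commute)
  have "complex_of_real (sqnorm B (app B U v))
      = (\<Sum>i\<in>B. cnj (\<Sum>j\<in>B. U i j * v j) * (\<Sum>j'\<in>B. U i j' * v j'))"
    by (simp only: sqnorm_def app_def of_real_sum cmod_sq)
  also have "\<dots> = (\<Sum>i\<in>B. \<Sum>j\<in>B. \<Sum>j'\<in>B. cnj (v j) * v j' * (cnj (U i j) * U i j'))"
    by (simp add: sum_distrib_left sum_distrib_right mult_ac)
  also have "\<dots> = (\<Sum>j\<in>B. \<Sum>j'\<in>B. cnj (v j) * v j' * (\<Sum>i\<in>B. cnj (U i j) * U i j'))"
    by (subst sum.swap, simp add: sum_distrib_left, subst sum.swap, simp add: sum_distrib_left)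
  also have "\<dots> = (\<Sum>j\<in>B. \<Sum>j'\<in>B. cnj (v j) * v j' * (if j = j' then 1 else 0))"
    using U unfolding is_unitary_def by (intro sum.cong refl) auto
  also have "\<dots> = (\<Sum>j\<in>B. cnj (v j) * v j)"
    using fin by (simp add: if_distrib cong: if_cong)
  also have "\<dots> = complex_of_real (sqnorm B v)"
    by (simp only: sqnorm_def of_real_sum cmod_sq)
  finally show ?thesis
    using of_real_eq_iff by blast
qed

lemma l2norm_unitary_app: "is_unitary B U \<Longrightarrow> finite B \<Longrightarrow> l2norm B (app B U v) = l2norm B v"
  by (simp add: l2norm_eq_sqrt_sqnorm sqnorm_unitary_app)

lemma abs_sum_sq_diff_le:
  assumes "S \<subseteq> B" "finite B"
  shows "\<bar>(\<Sum>b\<in>S. (cmod (v b))\<^sup>2) - (\<Sum>b\<in>S. (cmod (w b))\<^sup>2)\<bar>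
    \<le> l2norm B (\<lambda>b. v b - w b) * (l2norm B v + l2norm B w)"
proof -
  let ?d = "\<lambda>b. cmod (v b - w b)" and ?s = "\<lambda>b. cmod (v b) + cmod (w b)"
  have pointwise: "\<bar>(cmod (v b))\<^sup>2 - (cmod (w b))\<^sup>2\<bar> \<le> ?d b * ?s b" for b
  proof -
    have "(cmod (v b))\<^sup>2 - (cmod (w b))\<^sup>2 = (cmod (v b) - cmod (w b)) * ?s b"
      by (simp add: power2_eq_square algebra_simps)
    then have "\<bar>(cmod (v b))\<^sup>2 - (cmod (w b))\<^sup>2\<bar> = \<bar>cmod (v b) - cmod (w b)\<bar> * ?s b"
      by (simp add: abs_mult)
    also have "\<dots> \<le> ?d b * ?s b"
      by (intro mult_right_mono) (auto simp: norm_triangle_ineq3)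
    finally show ?thesis .
  qed
  have "\<bar>(\<Sum>b\<in>S. (cmod (v b))\<^sup>2) - (\<Sum>b\<in>S. (cmod (w b))\<^sup>2)\<bar>
      \<le> (\<Sum>b\<in>S. \<bar>(cmod (v b))\<^sup>2 - (cmod (w b))\<^sup>2\<bar>)"
    unfolding sum_subtractf[symmetric] by (rule sum_abs)
  also have "\<dots> \<le> (\<Sum>b\<in>S. ?d b * ?s b)"
    by (rule sum_mono) (rule pointwise)
  also have "\<dots> \<le> (\<Sum>b\<in>B. ?d b * ?s b)"
    using assms by (intro sum_mono2) auto
  also have "\<dots> \<le> L2_set ?d B * L2_set ?s B"
    using L2_set_mult_ineq[of ?d ?s B] by simp
  also have "\<dots> \<le> l2norm B (\<lambda>b. v b - w b) * (l2norm B v + l2norm B w)"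
    unfolding l2norm_def by (intro mult_left_mono L2_set_triangle_ineq L2_set_nonneg)
  finally show ?thesis .
qed

lemma app_query_op:
  assumes \<tau>: "\<tau> permutes strs n" and b: "(x, z, w) \<in> qbasis n m"
  shows "app (qbasis n m) (query_op \<tau>) v (x, z, w) = v (x, Bit_Operations.xor z (\<tau> x), w)"
proof -
  let ?j0 = "(x, Bit_Operations.xor z (\<tau> x), w)"
  have "?j0 \<in> qbasis n m"
    using b \<tau> by (simp add: mem_qbasis_iff xor_strs permutes_in_image)
  moreover have "query_op \<tau> (x, z, w) j * v j = (if j = ?j0 then v j else 0)" for j
    unfolding query_op_def using xor_eq_iff[of z _ "\<tau> x"] by (cases j) auto
  ultimately show ?thesis
    by (simp add: app_def)
qed

lemma sqnorm_app_query_op: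
  assumes \<tau>: "\<tau> permutes strs n"
  shows "sqnorm (qbasis n m) (app (qbasis n m) (query_op \<tau>) v) = sqnorm (qbasis n m) v"
proof -
  let ?g = "\<lambda>(x, z, w). (x, Bit_Operations.xor z (\<tau> x), w)"
  have "sqnorm (qbasis n m) (app (qbasis n m) (query_op \<tau>) v)
      = (\<Sum>b\<in>qbasis n m. (cmod (v (?g b)))\<^sup>2)"
    unfolding sqnorm_def by (intro sum.cong refl) (auto simp: app_query_op[OF \<tau>])
  also have "\<dots> = sqnorm (qbasis n m) v"
    unfolding sqnorm_def
    by (rule sum.reindex_bij_witness[where i = ?g and j = ?g])
       (auto simp: mem_qbasis_iff \<tau> xor_strs permutes_in_image)
  finally show ?thesis .
qed

lemma l2norm_app_query_op:
  "\<tau> permutes strs n \<Longrightarrow> l2norm (qbasis n m) (app (qbasis n m) (query_op \<tau>) v) = l2norm (qbasis n m) v"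
  by (simp add: l2norm_eq_sqrt_sqnorm sqnorm_app_query_op)

text \<open>The query weight of v at x is the probability of finding x in the query register.\<close>

definition query_weight :: "nat \<Rightarrow> nat \<Rightarrow> qvec \<Rightarrow> nat \<Rightarrow> real" where
  "query_weight n m v x = (\<Sum>p\<in>strs n \<times> {..<m}. (cmod (v (x, fst p, snd p)))\<^sup>2)"

lemma query_weight_nonneg: "0 \<le> query_weight n m v x"
  by (simp add: query_weight_def sum_nonneg)

lemma sqnorm_eq_sum_query_weight: "sqnorm (qbasis n m) v = (\<Sum>x\<in>strs n. query_weight n m v x)"
  unfolding sqnorm_def query_weight_def qbasis_def
  by (simp add: sum.cartesian_product split_def)

lemma sum_xor_shift:
  assumes "c \<in> strs n"
  shows "(\<Sum>p\<in>strs n \<times> {..<m}. f (Bit_Operations.xor (fst p) c, snd p)) = (\<Sum>p\<in>strs n \<times> {..<m}. f p)"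
  by (rule sum.reindex_bij_witness[where i = "\<lambda>p. (Bit_Operations.xor (fst p) c, snd p)"
        and j = "\<lambda>p. (Bit_Operations.xor (fst p) c, snd p)"])
     (auto simp: assms intro!: xor_strs)

lemma query_weight_xor_shift:
  "c \<in> strs n \<Longrightarrow> (\<Sum>p\<in>strs n \<times> {..<m}. (cmod (v (x, Bit_Operations.xor (fst p) c, snd p)))\<^sup>2)
     = query_weight n m v x"
  unfolding query_weight_def
  using sum_xor_shift[where f = "\<lambda>p. (cmod (v (x, fst p, snd p)))\<^sup>2"] by simp

lemma cmod_diff_sq_le: "(cmod (a - b))\<^sup>2 \<le> 2 * (cmod a)\<^sup>2 + 2 * (cmod b)\<^sup>2"
proof -
  have "(cmod (a - b))\<^sup>2 \<le> (cmod a + cmod b)\<^sup>2"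
    by (simp add: power_mono norm_triangle_ineq4)
  also have "\<dots> \<le> 2 * (cmod a)\<^sup>2 + 2 * (cmod b)\<^sup>2"
    using zero_le_power2[of "cmod a - cmod b"] by (simp add: power2_eq_square algebra_simps)
  finally show ?thesis .
qed

lemma sqnorm_query_op_diff_le:
  assumes \<sigma>: "\<sigma> permutes strs n" and \<tau>: "\<tau> permutes strs n" and E: "finite E"
    and dif: "\<And>x. x \<in> strs n \<Longrightarrow> \<sigma> x \<noteq> \<tau> x \<Longrightarrow> x \<in> E"
  shows "sqnorm (qbasis n m)
      (\<lambda>b. app (qbasis n m) (query_op \<sigma>) v b - app (qbasis n m) (query_op \<tau>) v b)
    \<le> 4 * (\<Sum>x\<in>E. query_weight n m v x)"
proof -
  define D where "D x = (\<Sum>p\<in>strs n \<times> {..<m}.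
      (cmod (v (x, Bit_Operations.xor (fst p) (\<sigma> x), snd p)
           - v (x, Bit_Operations.xor (fst p) (\<tau> x), snd p)))\<^sup>2)" for x
  have D_le: "D x \<le> 4 * query_weight n m v x" if "x \<in> strs n" for x
  proof -
    have sx: "\<sigma> x \<in> strs n" "\<tau> x \<in> strs n"
      using that \<sigma> \<tau> by (auto simp: permutes_in_image)
    have "D x \<le> (\<Sum>p\<in>strs n \<times> {..<m}. 2 * (cmod (v (x, Bit_Operations.xor (fst p) (\<sigma> x), snd p)))\<^sup>2
                                     + 2 * (cmod (v (x, Bit_Operations.xor (fst p) (\<tau> x), snd p)))\<^sup>2)"
      unfolding D_def by (rule sum_mono) (rule cmod_diff_sq_le)
    also have "\<dots> = 4 * query_weight n m v x"
      using query_weight_xor_shift[OF sx(1)] query_weight_xor_shift[OF sx(2)]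
      by (simp add: sum.distrib sum_distrib_left[symmetric])
    finally show ?thesis .
  qed
  have "sqnorm (qbasis n m)
      (\<lambda>b. app (qbasis n m) (query_op \<sigma>) v b - app (qbasis n m) (query_op \<tau>) v b)
      = (\<Sum>b\<in>qbasis n m. (cmod (v (fst b, Bit_Operations.xor (fst (snd b)) (\<sigma> (fst b)), snd (snd b))
           - v (fst b, Bit_Operations.xor (fst (snd b)) (\<tau> (fst b)), snd (snd b))))\<^sup>2)"
    unfolding sqnorm_def by (intro sum.cong refl) (auto simp: app_query_op[OF \<sigma>] app_query_op[OF \<tau>])
  also have "\<dots> = (\<Sum>x\<in>strs n. D x)"
    unfolding D_def qbasis_def by (simp add: sum.cartesian_product split_def)
  also have "\<dots> = (\<Sum>x\<in>strs n \<inter> E. D x)"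
    by (rule sum.mono_neutral_right) (auto simp: D_def dest: dif)
  also have "\<dots> \<le> (\<Sum>x\<in>strs n \<inter> E. 4 * query_weight n m v x)"
    using D_le by (intro sum_mono) auto
  also have "\<dots> \<le> (\<Sum>x\<in>E. 4 * query_weight n m v x)"
    by (rule sum_mono2) (auto simp: E query_weight_nonneg)
  finally show ?thesis
    by (simp add: sum_distrib_left)
qed

lemma sqrt_sum_le_sum_sqrt:
  assumes "\<And>x. 0 \<le> f x"
  shows "sqrt (\<Sum>x\<in>E. f x) \<le> (\<Sum>x\<in>E. sqrt (f x))"
proof -
  have "sqrt (\<Sum>x\<in>E. f x) = L2_set (\<lambda>x. sqrt (f x)) E"
    unfolding L2_set_def using assms by simp
  also have "\<dots> \<le> (\<Sum>x\<in>E. sqrt (f x))"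
    by (rule L2_set_le_sum) (simp add: assms)
  finally show ?thesis .
qed

lemma l2norm_query_op_diff_le:
  assumes "\<sigma> permutes strs n" "\<tau> permutes strs n" "finite E"
    and "\<And>x. x \<in> strs n \<Longrightarrow> \<sigma> x \<noteq> \<tau> x \<Longrightarrow> x \<in> E"
  shows "l2norm (qbasis n m)
      (\<lambda>b. app (qbasis n m) (query_op \<sigma>) v b - app (qbasis n m) (query_op \<tau>) v b)
    \<le> 2 * (\<Sum>x\<in>E. sqrt (query_weight n m v x))"
proof -
  have "l2norm (qbasis n m)
      (\<lambda>b. app (qbasis n m) (query_op \<sigma>) v b - app (qbasis n m) (query_op \<tau>) v b)
      \<le> sqrt (4 * (\<Sum>x\<in>E. query_weight n m v x))"
    unfolding l2norm_eq_sqrt_sqnorm by (rule real_sqrt_le_mono) (rule sqnorm_query_op_diff_le[OF assms])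
  also have "\<dots> \<le> 2 * (\<Sum>x\<in>E. sqrt (query_weight n m v x))"
    using sqrt_sum_le_sum_sqrt[of "query_weight n m v" E]
    by (simp add: real_sqrt_mult query_weight_nonneg)
  finally show ?thesis .
qed

lemma sqnorm_ket0_le:
  assumes "finite B"
  shows "sqnorm B ket0 \<le> 1"
proof -
  have "sqnorm B ket0 = (\<Sum>b\<in>B. if b = (0, 0, 0) then 1 else 0)"
    unfolding sqnorm_def ket0_def by (intro sum.cong refl) auto
  also have "\<dots> \<le> 1"
    using assms by (simp add: sum.delta)
  finally show ?thesis .
qed

lemma sqnorm_qstate_le:
  assumes V: "valid_alg n m T U" and y: "y \<in> strs n" and \<sigma>: "\<sigma> permutes strs n"
  shows "t \<le> T \<Longrightarrow> sqnorm (qbasis n m) (qstate n m U ch \<sigma> y t) \<le> 1"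
proof (induction t)
  case 0
  have "is_unitary (qbasis n m) (U y 0)"
    using V y unfolding valid_alg_def by auto
  then show ?case
    by (simp add: sqnorm_unitary_app sqnorm_ket0_le)
next
  case (Suc t)
  have "is_unitary (qbasis n m) (U y (Suc t))"
    using V y Suc.prems unfolding valid_alg_def by auto
  moreover have "(if ch y t then inv \<sigma> else \<sigma>) permutes strs n"
    using \<sigma> by (simp add: permutes_inv)
  ultimately show ?case
    using Suc by (simp add: sqnorm_unitary_app sqnorm_app_query_op)
qed

lemma accept_prob_bounds:
  assumes "valid_alg n m T U" "y \<in> strs n" "\<sigma> permutes strs n"
  shows "0 \<le> accept_prob n m T U ch Acc \<sigma> y \<and> accept_prob n m T U ch Acc \<sigma> y \<le> 1"
proof -
  have "accept_prob n m T U ch Acc \<sigma> y \<le> sqnorm (qbasis n m) (qstate n m U ch \<sigma> y T)"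
    unfolding accept_prob_def sqnorm_def by (rule sum_mono2) auto
  also have "\<dots> \<le> 1"
    by (rule sqnorm_qstate_le[OF assms order.refl])
  finally show ?thesis
    by (simp add: accept_prob_def sum_nonneg)
qed

lemma accept_prob_diff_le:
  assumes V: "valid_alg n m T U" and y: "y \<in> strs n"
    and \<sigma>: "\<sigma> permutes strs n" and \<tau>: "\<tau> permutes strs n"
  shows "\<bar>accept_prob n m T U ch Acc \<sigma> y - accept_prob n m T U ch Acc \<tau> y\<bar>
    \<le> 2 * l2norm (qbasis n m) (\<lambda>b. qstate n m U ch \<sigma> y T b - qstate n m U ch \<tau> y T b)"
proof -
  let ?D = "l2norm (qbasis n m) (\<lambda>b. qstate n m U ch \<sigma> y T b - qstate n m U ch \<tau> y T b)"
  have norms: "l2norm (qbasis n m) (qstate n m U ch \<sigma> y T) \<le> 1"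
    "l2norm (qbasis n m) (qstate n m U ch \<tau> y T) \<le> 1"
    using sqnorm_qstate_le[OF V y \<sigma> order.refl] sqnorm_qstate_le[OF V y \<tau> order.refl]
    by (simp_all add: l2norm_eq_sqrt_sqnorm)
  have "\<bar>accept_prob n m T U ch Acc \<sigma> y - accept_prob n m T U ch Acc \<tau> y\<bar>
      \<le> ?D * (l2norm (qbasis n m) (qstate n m U ch \<sigma> y T) + l2norm (qbasis n m) (qstate n m U ch \<tau> y T))"
    unfolding accept_prob_def by (rule abs_sum_sq_diff_le) auto
  also have "\<dots> \<le> ?D * 2"
    using norms by (intro mult_left_mono) (auto simp: l2norm_def)
  finally show ?thesis
    by (simp add: mult.commute)
qed

definition oracle_step :: "nat \<Rightarrow> nat \<Rightarrow> (nat \<Rightarrow> nat \<Rightarrow> bool) \<Rightarrow> nat \<Rightarrow> (nat \<Rightarrow> nat) \<Rightarrow> nat \<Rightarrow> qvec \<Rightarrow> qvec" where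
  "oracle_step n m ch y \<sigma> t v = app (qbasis n m) (query_op (if ch y t then inv \<sigma> else \<sigma>)) v"

text \<open>The hybrid argument: the unitaries preserve distances, so only the queries add to the
  distance between the two runs.\<close>

lemma qstate_dist_le_sum_oracle_dist:
  assumes V: "valid_alg n m T U" and y: "y \<in> strs n"
    and \<sigma>: "\<sigma> permutes strs n" and \<tau>: "\<tau> permutes strs n"
  shows "T' \<le> T \<Longrightarrow> l2norm (qbasis n m) (\<lambda>b. qstate n m U ch \<sigma> y T' b - qstate n m U ch \<tau> y T' b)
    \<le> (\<Sum>t<T'. l2norm (qbasis n m) (\<lambda>b. oracle_step n m ch y \<sigma> t (qstate n m U ch \<tau> y t) b
                                       - oracle_step n m ch y \<tau> t (qstate n m U ch \<tau> y t) b))"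
proof (induction T')
  case 0
  then show ?case
    by (simp add: l2norm_def L2_set_def)
next
  case (Suc t)
  let ?B = "qbasis n m" and ?O = "oracle_step n m ch y"
  let ?ps = "qstate n m U ch \<sigma> y t" and ?pt = "qstate n m U ch \<tau> y t"
  have "is_unitary ?B (U y (Suc t))"
    using V y Suc.prems unfolding valid_alg_def by auto
  have "l2norm ?B (\<lambda>b. qstate n m U ch \<sigma> y (Suc t) b - qstate n m U ch \<tau> y (Suc t) b)
      = l2norm ?B (app ?B (U y (Suc t)) (\<lambda>b. ?O \<sigma> t ?ps b - ?O \<tau> t ?pt b))"
    by (simp add: app_diff oracle_step_def)
  also have "\<dots> = l2norm ?B (\<lambda>b. ?O \<sigma> t ?ps b - ?O \<tau> t ?pt b)"
    using \<open>is_unitary ?B (U y (Suc t))\<close> by (simp add: l2norm_unitary_app)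
  also have "\<dots> = l2norm ?B (\<lambda>b. ?O \<sigma> t (\<lambda>b. ?ps b - ?pt b) b + (?O \<sigma> t ?pt b - ?O \<tau> t ?pt b))"
    by (simp add: oracle_step_def app_diff)
  also have "\<dots> \<le> l2norm ?B (?O \<sigma> t (\<lambda>b. ?ps b - ?pt b)) + l2norm ?B (\<lambda>b. ?O \<sigma> t ?pt b - ?O \<tau> t ?pt b)"
    by (rule l2norm_add_le)
  also have "l2norm ?B (?O \<sigma> t (\<lambda>b. ?ps b - ?pt b)) = l2norm ?B (\<lambda>b. ?ps b - ?pt b)"
    unfolding oracle_step_def using \<sigma> by (simp add: l2norm_app_query_op permutes_inv)
  finally show ?case
    using Suc by simp
qed

definition query_mass :: "nat \<Rightarrow> nat \<Rightarrow> (nat \<Rightarrow> nat \<Rightarrow> qmat) \<Rightarrow> (nat \<Rightarrow> nat \<Rightarrow> bool)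
    \<Rightarrow> (nat \<Rightarrow> nat) \<Rightarrow> nat \<Rightarrow> nat \<Rightarrow> nat \<Rightarrow> real" where
  "query_mass n m U ch \<sigma> y t x = query_weight n m (qstate n m U ch \<sigma> y t) x"

lemma query_mass_nonneg: "0 \<le> query_mass n m U ch \<sigma> y t x"
  by (simp add: query_mass_def query_weight_nonneg)

lemma sum_query_mass_le:
  assumes "valid_alg n m T U" "y \<in> strs n" "\<sigma> permutes strs n" "t \<le> T"
  shows "(\<Sum>x\<in>strs n. query_mass n m U ch \<sigma> y t x) \<le> 1"
  using sqnorm_qstate_le[OF assms] by (simp add: query_mass_def sqnorm_eq_sum_query_weight)

lemma query_mass_le_1:
  assumes "valid_alg n m T U" "y \<in> strs n" "\<sigma> permutes strs n" "t \<le> T" and x: "x \<in> strs n"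
  shows "query_mass n m U ch \<sigma> y t x \<le> 1"
proof -
  have "query_mass n m U ch \<sigma> y t x \<le> (\<Sum>x\<in>strs n. query_mass n m U ch \<sigma> y t x)"
    by (rule member_le_sum) (auto simp: x query_mass_nonneg)
  then show ?thesis
    using sum_query_mass_le[OF assms(1-4), where ch = ch] by linarith
qed

lemma inv_comp_transpose_neq:
  assumes "\<tau> permutes S" "inv (\<tau> \<circ> Transposition.transpose u r) x \<noteq> inv \<tau> x"
  shows "x \<in> {\<tau> u, \<tau> r}"
proof -
  have "inv (\<tau> \<circ> Transposition.transpose u r) = Transposition.transpose u r \<circ> inv \<tau>"
    using permutes_bij[OF assms(1)] by (simp add: o_inv_distrib)
  then have "inv \<tau> x \<in> {u, r}"
    using assms(2) by (metis comp_apply insertCI transpose_apply_other)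
  then show ?thesis
    using permutes_inverses(1)[OF assms(1)] by (metis insert_iff singletonD)
qed

lemma l2norm_oracle_step_transpose_diff_le:
  assumes \<tau>: "\<tau> permutes strs n" and u: "u \<in> strs n" and r: "r \<in> strs n"
  shows "l2norm (qbasis n m) (\<lambda>b. oracle_step n m ch y (\<tau> \<circ> Transposition.transpose u r) t v b
                                 - oracle_step n m ch y \<tau> t v b)
    \<le> 2 * (sqrt (query_weight n m v u) + sqrt (query_weight n m v r)
           + sqrt (query_weight n m v (\<tau> u)) + sqrt (query_weight n m v (\<tau> r)))"
proof -
  let ?\<sigma> = "\<tau> \<circ> Transposition.transpose u r" and ?w = "\<lambda>x. sqrt (query_weight n m v x)"
  have \<sigma>: "?\<sigma> permutes strs n"
    using \<tau> u r by (simp add: permutes_compose permutes_swap_id)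
  have pair: "(\<Sum>x\<in>{a, b}. ?w x) \<le> ?w a + ?w b" for a b
    by (cases "a = b") (auto simp: query_weight_nonneg)
  show ?thesis
  proof (cases "ch y t")
    case False
    have "l2norm (qbasis n m) (\<lambda>b. oracle_step n m ch y ?\<sigma> t v b - oracle_step n m ch y \<tau> t v b)
        \<le> 2 * (\<Sum>x\<in>{u, r}. ?w x)"
      unfolding oracle_step_def using False
      by (simp, intro l2norm_query_op_diff_le[OF \<sigma> \<tau>])
         (auto simp: Transposition.transpose_def split: if_splits)
    then show ?thesis
      using pair[of u r] real_sqrt_ge_zero[OF query_weight_nonneg[of n m v "\<tau> u"]]
        real_sqrt_ge_zero[OF query_weight_nonneg[of n m v "\<tau> r"]] by (smt (verit))
  next
    case True
    have "l2norm (qbasis n m) (\<lambda>b. oracle_step n m ch y ?\<sigma> t v b - oracle_step n m ch y \<tau> t v b)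
        \<le> 2 * (\<Sum>x\<in>{\<tau> u, \<tau> r}. ?w x)"
      unfolding oracle_step_def using True
      by (simp, intro l2norm_query_op_diff_le[OF permutes_inv[OF \<sigma>] permutes_inv[OF \<tau>]])
         (use inv_comp_transpose_neq[OF \<tau>] in auto)
    then show ?thesis
      using pair[of "\<tau> u" "\<tau> r"] real_sqrt_ge_zero[OF query_weight_nonneg[of n m v u]]
        real_sqrt_ge_zero[OF query_weight_nonneg[of n m v r]] by (smt (verit))
  qed
qed

lemma accept_prob_transpose_diff_le:
  assumes V: "valid_alg n m T U" and y: "y \<in> strs n" and \<tau>: "\<tau> permutes strs n"
    and u: "u \<in> strs n" and r: "r \<in> strs n"
  shows "\<bar>accept_prob n m T U ch Acc (\<tau> \<circ> Transposition.transpose u r) y - accept_prob n m T U ch Acc \<tau> y\<bar>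
    \<le> 4 * (\<Sum>t<T. sqrt (query_mass n m U ch \<tau> y t u) + sqrt (query_mass n m U ch \<tau> y t r)
                   + sqrt (query_mass n m U ch \<tau> y t (\<tau> u)) + sqrt (query_mass n m U ch \<tau> y t (\<tau> r)))"
proof -
  let ?\<sigma> = "\<tau> \<circ> Transposition.transpose u r"
  have \<sigma>: "?\<sigma> permutes strs n"
    using \<tau> u r by (simp add: permutes_compose permutes_swap_id)
  have "\<bar>accept_prob n m T U ch Acc ?\<sigma> y - accept_prob n m T U ch Acc \<tau> y\<bar>
      \<le> 2 * l2norm (qbasis n m) (\<lambda>b. qstate n m U ch ?\<sigma> y T b - qstate n m U ch \<tau> y T b)"
    by (rule accept_prob_diff_le[OF V y \<sigma> \<tau>])
  also have "\<dots> \<le> 2 * (\<Sum>t<T. l2norm (qbasis n m)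
      (\<lambda>b. oracle_step n m ch y ?\<sigma> t (qstate n m U ch \<tau> y t) b
         - oracle_step n m ch y \<tau> t (qstate n m U ch \<tau> y t) b))"
    using qstate_dist_le_sum_oracle_dist[OF V y \<sigma> \<tau> order.refl] by simp
  also have "\<dots> \<le> 2 * (\<Sum>t<T. 2 * (sqrt (query_mass n m U ch \<tau> y t u) + sqrt (query_mass n m U ch \<tau> y t r)
                   + sqrt (query_mass n m U ch \<tau> y t (\<tau> u)) + sqrt (query_mass n m U ch \<tau> y t (\<tau> r))))"
    unfolding query_mass_def
    by (intro mult_left_mono sum_mono l2norm_oracle_step_transpose_diff_le[OF \<tau> u r]) auto
  finally show ?thesis
    by (simp add: sum_distrib_left)
qed

section \<open>Walks\<close>

lemma flip1_flip1 [simp]: "flip1 (flip1 x) = x"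
  by (simp add: flip1_def xor.assoc)

lemma flip1_neq [simp]: "flip1 x \<noteq> x"
proof -
  have "odd x \<Longrightarrow> x \<noteq> 0"
    by (metis even_zero)
  then show ?thesis
    unfolding flip1_def xor_one_eq by (cases "even x") auto
qed

lemma neq_flip1 [simp]: "x \<noteq> flip1 x"
  using flip1_neq by metis

lemma flip1_eq_iff: "flip1 x = flip1 y \<longleftrightarrow> x = y"
  by (metis flip1_flip1)

lemma flip1_strs:
  assumes "0 < n" "x \<in> strs n"
  shows "flip1 x \<in> strs n"
proof -
  have "even ((2::nat) ^ n)"
    using assms(1) by simp
  then have "even x \<Longrightarrow> x + 1 < 2 ^ n"
    using assms(2) unfolding strs_def by (metis lessThan_iff Suc_eq_plus1 Suc_lessI even_Suc)
  then show ?thesis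
    using assms(2) unfolding flip1_def xor_one_eq strs_def by auto
qed

text \<open>Bit True applies \<sigma> and bit False applies \<pi> = \<sigma> \<circ> X_1, so a step from x on bit c
  evaluates \<sigma> at step_input x c.\<close>

definition step_input :: "nat \<Rightarrow> bool \<Rightarrow> nat" where
  "step_input x c = (if c then x else flip1 x)"

definition walk_from :: "(nat \<Rightarrow> nat) \<Rightarrow> nat \<Rightarrow> bool list \<Rightarrow> nat" where
  "walk_from \<sigma> x bs = foldl (\<lambda>x b. \<sigma> (step_input x b)) x bs"

fun walk_inputs :: "(nat \<Rightarrow> nat) \<Rightarrow> nat \<Rightarrow> bool list \<Rightarrow> nat list" where
  "walk_inputs \<sigma> x [] = []"
| "walk_inputs \<sigma> x (b # bs) = step_input x b # walk_inputs \<sigma> (\<sigma> (step_input x b)) bs"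

lemma walk_eq_walk_from: "walk \<sigma> bs = walk_from \<sigma> 0 bs"
proof -
  have "(\<lambda>x b. if b then \<sigma> x else (\<sigma> \<circ> flip1) x) = (\<lambda>x b. \<sigma> (step_input x b))"
    by (auto simp: step_input_def fun_eq_iff)
  then show ?thesis
    by (simp add: walk_def walk_from_def)
qed

lemma walk_from_Nil [simp]: "walk_from \<sigma> x [] = x"
  by (simp add: walk_from_def)

lemma walk_from_Cons [simp]: "walk_from \<sigma> x (b # bs) = walk_from \<sigma> (\<sigma> (step_input x b)) bs"
  by (simp add: walk_from_def)

lemma walk_from_append: "walk_from \<sigma> x (a @ b) = walk_from \<sigma> (walk_from \<sigma> x a) b"
  by (simp add: walk_from_def)

lemma walk_from_snoc: "walk_from \<sigma> x (a @ [c]) = \<sigma> (step_input (walk_from \<sigma> x a) c)"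
  by (simp add: walk_from_def)

lemma step_input_strs: "0 < n \<Longrightarrow> x \<in> strs n \<Longrightarrow> step_input x c \<in> strs n"
  by (simp add: step_input_def flip1_strs)

lemma step_input_eq_iff: "step_input x c = step_input y c \<longleftrightarrow> x = y"
  by (simp add: step_input_def flip1_eq_iff)

lemma step_input_eq_cases: "step_input x c = step_input x' c' \<Longrightarrow> x = x' \<or> x = flip1 x'"
  unfolding step_input_def by (metis flip1_flip1)

lemma walk_from_strs:
  "0 < n \<Longrightarrow> \<sigma> permutes strs n \<Longrightarrow> x \<in> strs n \<Longrightarrow> walk_from \<sigma> x bs \<in> strs n"
  by (induction bs arbitrary: x) (auto simp: step_input_strs permutes_in_image)

lemma length_walk_inputs [simp]: "length (walk_inputs \<sigma> x bs) = length bs"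
  by (induction bs arbitrary: x) auto

lemma walk_inputs_append:
  "walk_inputs \<sigma> x (a @ b) = walk_inputs \<sigma> x a @ walk_inputs \<sigma> (walk_from \<sigma> x a) b"
  by (induction a arbitrary: x) auto

lemma nth_walk_inputs:
  "j < length bs \<Longrightarrow> walk_inputs \<sigma> x bs ! j = step_input (walk_from \<sigma> x (take j bs)) (bs ! j)"
proof (induction bs arbitrary: x j)
  case Nil
  then show ?case by simp
next
  case (Cons b bs)
  then show ?case by (cases j) auto
qed

lemma walk_from_take_Suc:
  "j < length bs \<Longrightarrow> walk_from \<sigma> x (take (Suc j) bs) = \<sigma> (walk_inputs \<sigma> x bs ! j)"
  by (simp add: nth_walk_inputs take_Suc_conv_app_nth walk_from_snoc)

lemma walk_from_cong_inputs:
  assumes "\<And>v. v \<in> set (walk_inputs \<sigma> x bs) \<Longrightarrow> \<sigma>' v = \<sigma> v"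
  shows "walk_from \<sigma>' x bs = walk_from \<sigma> x bs \<and> walk_inputs \<sigma>' x bs = walk_inputs \<sigma> x bs"
  using assms by (induction bs arbitrary: x) auto

lemma inj_on_walk_from:
  assumes \<sigma>: "\<sigma> permutes strs n" and n: "0 < n"
  shows "inj_on (\<lambda>x. walk_from \<sigma> x bs) (strs n)"
proof (induction bs)
  case Nil
  then show ?case by simp
next
  case (Cons b bs)
  show ?case
  proof (rule inj_onI)
    fix x x'
    assume x: "x \<in> strs n" "x' \<in> strs n" and eq: "walk_from \<sigma> x (b # bs) = walk_from \<sigma> x' (b # bs)"
    have "\<sigma> (step_input x b) \<in> strs n" "\<sigma> (step_input x' b) \<in> strs n"
      using x \<sigma> n by (auto simp: step_input_strs permutes_in_image)
    moreover have "walk_from \<sigma> (\<sigma> (step_input x b)) bs = walk_from \<sigma> (\<sigma> (step_input x' b)) bs"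
      using eq by simp
    ultimately have "\<sigma> (step_input x b) = \<sigma> (step_input x' b)"
      using Cons.IH unfolding inj_on_def by blast
    then have "step_input x b = step_input x' b"
      using permutes_inj[OF \<sigma>] by (auto dest: injD)
    then show "x = x'"
      by (simp add: step_input_eq_iff)
  qed
qed

lemma bij_betw_walk_from:
  assumes "\<sigma> permutes strs n" "0 < n"
  shows "bij_betw (\<lambda>x. walk_from \<sigma> x bs) (strs n) (strs n)"
proof -
  have "(\<lambda>x. walk_from \<sigma> x bs) ` strs n = strs n"
    by (rule endo_inj_surj) (auto simp: inj_on_walk_from[OF assms] walk_from_strs[OF assms(2,1)])
  then show ?thesis
    using inj_on_walk_from[OF assms] by (simp add: bij_betw_def)
qed

definition last_input :: "(nat \<Rightarrow> nat) \<Rightarrow> bool list \<Rightarrow> nat" where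
  "last_input \<sigma> a = step_input (walk_from \<sigma> 0 (butlast a)) (last a)"

lemma walk_from_last_input: "a \<noteq> [] \<Longrightarrow> walk_from \<sigma> 0 a = \<sigma> (last_input \<sigma> a)"
  by (metis append_butlast_last_id last_input_def walk_from_snoc)

lemma last_input_strs: "0 < n \<Longrightarrow> \<sigma> permutes strs n \<Longrightarrow> last_input \<sigma> a \<in> strs n"
  by (simp add: last_input_def step_input_strs walk_from_strs)

lemma walk_inputs_append_last:
  assumes "a \<noteq> []"
  shows "walk_inputs \<sigma> 0 (a @ b)
    = walk_inputs \<sigma> 0 (butlast a) @ [last_input \<sigma> a] @ walk_inputs \<sigma> (\<sigma> (last_input \<sigma> a)) b"
proof -
  have "walk_inputs \<sigma> 0 (a @ b) = walk_inputs \<sigma> 0 a @ walk_inputs \<sigma> (walk_from \<sigma> 0 a) b"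
    by (rule walk_inputs_append)
  also have "walk_inputs \<sigma> 0 a = walk_inputs \<sigma> 0 (butlast a @ [last a])"
    using assms by simp
  also have "\<dots> = walk_inputs \<sigma> 0 (butlast a) @ [last_input \<sigma> a]"
    by (simp add: walk_inputs_append last_input_def)
  finally show ?thesis
    using walk_from_last_input[OF assms] by simp
qed

section \<open>Collisions of short walks\<close>

text \<open>The walks of length at most d from s form a binary tree. Numbering its nodes heap-wise
  (root 1, children 2 i and 2 i + 1 of i), a collision between two short walks shows up at a
  first node m whose value equals an earlier value or its flip; such an m is counted by
  resampling \<sigma> at the input of node m.\<close>

definition heap_index :: "bool list \<Rightarrow> nat" where
  "heap_index a = foldl (\<lambda>i c. 2 * i + of_bool c) 1 a"

lemma heap_index_Nil [simp]: "heap_index [] = 1"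
  by (simp add: heap_index_def)

lemma heap_index_snoc [simp]: "heap_index (a @ [c]) = 2 * heap_index a + of_bool c"
  by (simp add: heap_index_def)

lemma heap_index_ge_1: "1 \<le> heap_index a"
  by (induction a rule: rev_induct) auto

lemma heap_index_less: "heap_index a < 2 ^ (length a + 1)"
  by (induction a rule: rev_induct) auto

lemma heap_index_inj: "heap_index a = heap_index a' \<Longrightarrow> a = a'"
proof (induction a arbitrary: a' rule: rev_induct)
  case Nil
  show ?case
  proof (cases a' rule: rev_exhaust)
    case (snoc a'' c')
    then show ?thesis
      using Nil heap_index_ge_1[of a''] by simp
  qed simp
next
  case (snoc c a)
  show ?case
  proof (cases a' rule: rev_exhaust)
    case Nil
    then show ?thesis
      using snoc.prems heap_index_ge_1[of a] by simp
  next
    case (snoc a'' c')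
    have eq: "2 * heap_index a + of_bool c = 2 * heap_index a'' + of_bool c'"
      using snoc.prems snoc by simp
    have "c = odd (2 * heap_index a + of_bool c)"
      by simp
    also have "\<dots> = c'"
      using eq by simp
    finally have "c = c'" .
    with eq have "heap_index a = heap_index a''"
      by simp
    then show ?thesis
      using snoc.IH snoc \<open>c = c'\<close> by simp
  qed
qed

fun heap_walk :: "(nat \<Rightarrow> nat) \<Rightarrow> nat \<Rightarrow> nat \<Rightarrow> nat" where
  "heap_walk \<sigma> s i = (if i \<le> 1 then s else \<sigma> (step_input (heap_walk \<sigma> s (i div 2)) (odd i)))"

declare heap_walk.simps [simp del]

definition heap_input :: "(nat \<Rightarrow> nat) \<Rightarrow> nat \<Rightarrow> nat \<Rightarrow> nat" where
  "heap_input \<sigma> s i = step_input (heap_walk \<sigma> s (i div 2)) (odd i)"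

lemma heap_walk_le_1: "i \<le> 1 \<Longrightarrow> heap_walk \<sigma> s i = s"
  by (simp add: heap_walk.simps)

lemma heap_walk_ge_2: "2 \<le> i \<Longrightarrow> heap_walk \<sigma> s i = \<sigma> (heap_input \<sigma> s i)"
  by (simp add: heap_walk.simps heap_input_def)

lemma walk_from_eq_heap_walk: "walk_from \<sigma> s a = heap_walk \<sigma> s (heap_index a)"
proof (induction a rule: rev_induct)
  case Nil
  then show ?case by (simp add: heap_walk_le_1)
next
  case (snoc c a)
  have "(2 * heap_index a + of_bool c) div 2 = heap_index a" "odd (2 * heap_index a + of_bool c) = c"
    by simp_all
  then show ?case
    using heap_index_ge_1[of a] snoc by (simp add: walk_from_snoc heap_walk_ge_2 heap_input_def)
qed

lemma heap_walk_strs: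
  assumes "0 < n" "\<sigma> permutes strs n" "s \<in> strs n"
  shows "heap_walk \<sigma> s i \<in> strs n"
proof (induction i rule: less_induct)
  case (less i)
  then show ?case
    using assms by (cases "i \<le> 1")
      (auto simp: heap_walk_le_1 heap_walk_ge_2 heap_input_def step_input_strs permutes_in_image)
qed

lemma heap_input_strs: "0 < n \<Longrightarrow> \<sigma> permutes strs n \<Longrightarrow> s \<in> strs n \<Longrightarrow> heap_input \<sigma> s i \<in> strs n"
  by (simp add: heap_input_def step_input_strs heap_walk_strs)

lemma heap_walk_cong:
  assumes agree: "\<And>i. 2 \<le> i \<Longrightarrow> i \<le> j \<Longrightarrow> \<sigma>' (heap_input \<sigma> s i) = \<sigma> (heap_input \<sigma> s i)"
  shows "i \<le> j \<Longrightarrow> heap_walk \<sigma>' s i = heap_walk \<sigma> s i"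
proof (induction i rule: less_induct)
  case (less i)
  show ?case
  proof (cases "i \<le> 1")
    case True
    then show ?thesis by (simp add: heap_walk_le_1)
  next
    case False
    then have "heap_input \<sigma>' s i = heap_input \<sigma> s i"
      using less by (simp add: heap_input_def)
    then show ?thesis
      using False agree less.prems by (simp add: heap_walk_ge_2)
  qed
qed

definition fresh_at :: "(nat \<Rightarrow> nat) \<Rightarrow> nat \<Rightarrow> nat \<Rightarrow> bool" where
  "fresh_at \<sigma> s m \<longleftrightarrow>
     (\<forall>j. 1 \<le> j \<longrightarrow> j < m \<longrightarrow> heap_walk \<sigma> s m \<noteq> heap_walk \<sigma> s j \<and> heap_walk \<sigma> s m \<noteq> flip1 (heap_walk \<sigma> s j))"

definition fresh_below :: "(nat \<Rightarrow> nat) \<Rightarrow> nat \<Rightarrow> nat \<Rightarrow> bool" where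
  "fresh_below \<sigma> s m \<longleftrightarrow> (\<forall>i. 2 \<le> i \<longrightarrow> i < m \<longrightarrow> fresh_at \<sigma> s i)"

lemma fresh_below_distinct:
  assumes "fresh_below \<sigma> s m" "1 \<le> i" "i < m" "1 \<le> j" "j < m" "i \<noteq> j"
  shows "heap_walk \<sigma> s i \<noteq> heap_walk \<sigma> s j \<and> heap_walk \<sigma> s i \<noteq> flip1 (heap_walk \<sigma> s j)"
proof (cases "j < i")
  case True
  then show ?thesis
    using assms unfolding fresh_below_def fresh_at_def by auto
next
  case False
  then have "heap_walk \<sigma> s j \<noteq> heap_walk \<sigma> s i \<and> heap_walk \<sigma> s j \<noteq> flip1 (heap_walk \<sigma> s i)"
    using assms unfolding fresh_below_def fresh_at_def by auto
  then show ?thesis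
    by (metis flip1_flip1)
qed

lemma heap_input_distinct:
  assumes fresh: "fresh_below \<sigma> s m" and j: "2 \<le> j" "j < m"
  shows "heap_input \<sigma> s m \<noteq> heap_input \<sigma> s j"
proof
  assume eq: "heap_input \<sigma> s m = heap_input \<sigma> s j"
  show False
  proof (cases "m div 2 = j div 2")
    case True
    then have "odd m = odd j"
      using eq by (auto simp: heap_input_def step_input_def split: if_splits)
    with True have "m = j"
      by (metis div_mult_mod_eq odd_iff_mod_2_eq_one not_mod_2_eq_1_eq_0)
    then show False
      using j by simp
  next
    case False
    have "heap_walk \<sigma> s (m div 2) = heap_walk \<sigma> s (j div 2)
        \<or> heap_walk \<sigma> s (m div 2) = flip1 (heap_walk \<sigma> s (j div 2))"
      using eq by (simp add: heap_input_def step_input_eq_cases)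
    then show False
      using fresh_below_distinct[OF fresh _ _ _ _ False] j by auto
  qed
qed

lemma finite_perms [simp]: "finite (perms n)"
  unfolding perms_def by (rule finite_permutations) simp

lemma transpose_heap_input:
  assumes n: "0 < n" and \<sigma>: "\<sigma> permutes strs n" and s: "s \<in> strs n"
    and fresh: "fresh_below \<sigma> s m" and m: "2 \<le> m"
    and w: "w \<in> strs n" "w \<notin> heap_input \<sigma> s ` {2..<m}"
  defines "\<sigma>' \<equiv> \<sigma> \<circ> Transposition.transpose (heap_input \<sigma> s m) w"
  shows "\<sigma>' permutes strs n"
    and "\<And>i. i < m \<Longrightarrow> heap_walk \<sigma>' s i = heap_walk \<sigma> s i"
    and "\<And>i. i \<le> m \<Longrightarrow> heap_input \<sigma>' s i = heap_input \<sigma> s i"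
    and "fresh_below \<sigma>' s m"
    and "heap_walk \<sigma>' s m = \<sigma> w"
    and "heap_input \<sigma>' s ` {2..<m} = heap_input \<sigma> s ` {2..<m}"
    and "\<sigma>' \<circ> Transposition.transpose (heap_input \<sigma>' s m) w = \<sigma>"
proof -
  let ?v = "heap_input \<sigma> s m"
  show perm: "\<sigma>' permutes strs n"
    unfolding \<sigma>'_def using heap_input_strs[OF n \<sigma> s] w(1)
    by (intro permutes_compose[OF permutes_swap_id \<sigma>])
  have "\<sigma>' (heap_input \<sigma> s i) = \<sigma> (heap_input \<sigma> s i)" if "2 \<le> i" "i \<le> m - 1" for i
  proof -
    have "i < m"
      using that m by linarith
    then have "heap_input \<sigma> s i \<noteq> ?v" "heap_input \<sigma> s i \<noteq> w"
      using heap_input_distinct[OF fresh, of i] w(2) that m by (auto simp: image_iff)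
    then show ?thesis
      by (simp add: \<sigma>'_def transpose_apply_other)
  qed
  then show walks: "heap_walk \<sigma>' s i = heap_walk \<sigma> s i" if "i < m" for i
    using heap_walk_cong[of "m - 1" \<sigma>' \<sigma> s i] that by auto
  show inputs: "heap_input \<sigma>' s i = heap_input \<sigma> s i" if "i \<le> m" for i
    using walks[of "i div 2"] that m by (simp add: heap_input_def)
  show "fresh_below \<sigma>' s m"
    using fresh walks unfolding fresh_below_def fresh_at_def by auto
  show "heap_walk \<sigma>' s m = \<sigma> w"
    using inputs[of m] m by (simp add: heap_walk_ge_2 \<sigma>'_def)
  show "heap_input \<sigma>' s ` {2..<m} = heap_input \<sigma> s ` {2..<m}"
    using inputs by (intro image_cong) auto
  show "\<sigma>' \<circ> Transposition.transpose (heap_input \<sigma>' s m) w = \<sigma>"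
    using inputs[of m] by (simp add: \<sigma>'_def comp_assoc)
qed

lemma card_resampled_collisions_le:
  assumes n: "0 < n" and \<sigma>: "\<sigma> permutes strs n" and s: "s \<in> strs n"
    and fresh: "fresh_below \<sigma> s m" and m: "2 \<le> m"
  shows "card {w \<in> strs n - heap_input \<sigma> s ` {2..<m}.
           \<not> fresh_at (\<sigma> \<circ> Transposition.transpose (heap_input \<sigma> s m) w) s m} \<le> 2 * (m - 1)"
proof -
  define F where "F = heap_walk \<sigma> s ` {1..<m} \<union> (\<lambda>j. flip1 (heap_walk \<sigma> s j)) ` {1..<m}"
  let ?C = "{w \<in> strs n - heap_input \<sigma> s ` {2..<m}.
              \<not> fresh_at (\<sigma> \<circ> Transposition.transpose (heap_input \<sigma> s m) w) s m}"
  have "\<sigma> w \<in> F" if C: "w \<in> ?C" for w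
  proof -
    have w: "w \<in> strs n" "w \<notin> heap_input \<sigma> s ` {2..<m}"
      using C by auto
    note R = transpose_heap_input[OF n \<sigma> s fresh m w]
    obtain j where "1 \<le> j" "j < m" "\<sigma> w = heap_walk \<sigma> s j \<or> \<sigma> w = flip1 (heap_walk \<sigma> s j)"
      using C unfolding fresh_at_def by (auto simp: R(2,5))
    then show ?thesis
      by (auto simp: F_def)
  qed
  then have "card ?C \<le> card F"
    using permutes_inj[OF \<sigma>] card_image[of \<sigma> ?C] card_mono[of F "\<sigma> ` ?C"]
    by (auto simp: F_def inj_on_subset[of _ UNIV])
  also have "\<dots> \<le> card {1..<m} + card {1..<m}"
    unfolding F_def by (intro order.trans[OF card_Un_le] add_mono card_image_le) auto
  finally show ?thesis
    by simp
qed

lemma card_strs_diff_image_ge: "2 ^ n - real m \<le> real (card (strs n - f ` {2..<m}))"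
proof -
  have "card (strs n) \<le> card ((strs n - f ` {2..<m}) \<union> f ` {2..<m})"
    by (rule card_mono) auto
  also have "\<dots> \<le> card (strs n - f ` {2..<m}) + card (f ` {2..<m})"
    by (rule card_Un_le)
  also have "\<dots> \<le> card (strs n - f ` {2..<m}) + m"
    using card_image_le[of "{2..<m}" f] by simp
  finally have "real (2 ^ n) \<le> real (card (strs n - f ` {2..<m}) + m)"
    by (simp only: card_strs of_nat_le_iff)
  then show ?thesis
    by simp
qed

lemma card_first_collision_le:
  assumes n: "0 < n" and s: "s \<in> strs n" and m: "2 \<le> m"
  shows "real (card {\<sigma> \<in> perms n. fresh_below \<sigma> s m \<and> \<not> fresh_at \<sigma> s m}) * (2 ^ n - real m)
    \<le> 2 * real (m - 1) * real (card (perms n))"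
proof -
  define G where "G = {\<sigma> \<in> perms n. fresh_below \<sigma> s m}"
  define W where "W \<sigma> = strs n - heap_input \<sigma> s ` {2..<m}" for \<sigma>
  define h where "h p = (fst p \<circ> Transposition.transpose (heap_input (fst p) s m) (snd p), snd p)" for p
  define bad where "bad p = (of_bool (\<not> fresh_at (fst p) s m) :: real)" for p :: "(nat \<Rightarrow> nat) \<times> nat"
  have G: "\<sigma> permutes strs n" "fresh_below \<sigma> s m" if "\<sigma> \<in> G" for \<sigma>
    using that by (auto simp: G_def perms_def)
  have W_finite: "finite (W \<sigma>)" for \<sigma>
    by (simp add: W_def)
  have involution: "h p \<in> Sigma G W \<and> h (h p) = p" if "p \<in> Sigma G W" for p
    using that transpose_heap_input(1,4,6,7)[OF n G(1) s G(2) m, of "fst p" "snd p"]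
    by (cases p) (auto simp: h_def G_def W_def perms_def)
  have "{\<sigma> \<in> perms n. fresh_below \<sigma> s m \<and> \<not> fresh_at \<sigma> s m} = G \<inter> {\<sigma>. \<not> fresh_at \<sigma> s m}"
    by (auto simp: G_def)
  then have "real (card {\<sigma> \<in> perms n. fresh_below \<sigma> s m \<and> \<not> fresh_at \<sigma> s m}) * (2 ^ n - real m)
      = (\<Sum>\<sigma>\<in>G. of_bool (\<not> fresh_at \<sigma> s m) * (2 ^ n - real m))"
    by (simp add: G_def sum_distrib_right[symmetric])
  also have "\<dots> \<le> (\<Sum>\<sigma>\<in>G. \<Sum>w\<in>W \<sigma>. bad (\<sigma>, w))"
  proof (intro sum_mono)
    fix \<sigma>
    show "of_bool (\<not> fresh_at \<sigma> s m) * (2 ^ n - real m) \<le> (\<Sum>w\<in>W \<sigma>. bad (\<sigma>, w))"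
      using card_strs_diff_image_ge[where f = "heap_input \<sigma> s" and n = n and m = m]
      by (simp add: bad_def W_def)
  qed
  also have "\<dots> = (\<Sum>p\<in>Sigma G W. bad p)"
    by (subst sum.Sigma) (auto simp: G_def W_def)
  also have "\<dots> = (\<Sum>p\<in>Sigma G W. bad (h p))"
    by (rule sum.reindex_bij_witness[where i = h and j = h]) (use involution in auto)
  also have "\<dots> = (\<Sum>\<sigma>\<in>G. \<Sum>w\<in>W \<sigma>. bad (h (\<sigma>, w)))"
    by (subst sum.Sigma) (auto simp: G_def W_def)
  also have "\<dots> = (\<Sum>\<sigma>\<in>G. real (card {w \<in> W \<sigma>.
      \<not> fresh_at (\<sigma> \<circ> Transposition.transpose (heap_input \<sigma> s m) w) s m}))"
    by (intro sum.cong refl) (simp add: bad_def h_def W_finite Int_def)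
  also have "\<dots> \<le> (\<Sum>\<sigma>\<in>G. 2 * real (m - 1))"
  proof (intro sum_mono)
    fix \<sigma> assume "\<sigma> \<in> G"
    have "card {w \<in> W \<sigma>. \<not> fresh_at (\<sigma> \<circ> Transposition.transpose (heap_input \<sigma> s m) w) s m}
        \<le> 2 * (m - 1)"
      unfolding W_def using card_resampled_collisions_le[OF n G(1) s G(2) m] \<open>\<sigma> \<in> G\<close> by blast
    then show "real (card {w \<in> W \<sigma>. \<not> fresh_at (\<sigma> \<circ> Transposition.transpose (heap_input \<sigma> s m) w) s m})
        \<le> 2 * real (m - 1)"
      by (metis of_nat_le_iff of_nat_mult of_nat_numeral)
  qed
  also have "\<dots> = 2 * real (m - 1) * real (card G)"
    by simp
  also have "\<dots> \<le> 2 * real (m - 1) * real (card (perms n))"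
    using card_mono[of "perms n" G] by (intro mult_left_mono) (auto simp: G_def)
  finally show ?thesis .
qed

definition short_walks_inj :: "(nat \<Rightarrow> nat) \<Rightarrow> nat \<Rightarrow> nat \<Rightarrow> bool" where
  "short_walks_inj \<sigma> s d \<longleftrightarrow> inj_on (walk_from \<sigma> s) {a. length a \<le> d}"

lemma short_walks_inj_mono: "short_walks_inj \<sigma> s d \<Longrightarrow> d' \<le> d \<Longrightarrow> short_walks_inj \<sigma> s d'"
  unfolding short_walks_inj_def by (rule inj_on_subset) auto

lemma not_short_walks_inj_first_collision:
  assumes "\<not> short_walks_inj \<sigma> s d"
  shows "\<exists>m. 2 \<le> m \<and> m < 2 ^ (d + 1) \<and> fresh_below \<sigma> s m \<and> \<not> fresh_at \<sigma> s m"
proof -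
  obtain a a' where aa: "length a \<le> d" "length a' \<le> d" "a \<noteq> a'" "walk_from \<sigma> s a = walk_from \<sigma> s a'"
    using assms unfolding short_walks_inj_def inj_on_def by auto
  have short: "heap_index b < 2 ^ (d + 1)" if "length b \<le> d" for b
  proof -
    have "(2::nat) ^ (length b + 1) \<le> 2 ^ (d + 1)"
      using that by (intro power_increasing) auto
    then show ?thesis
      using heap_index_less[of b] by linarith
  qed
  have "\<not> fresh_below \<sigma> s (2 ^ (d + 1))"
    using fresh_below_distinct[of \<sigma> s "2 ^ (d + 1)" "heap_index a" "heap_index a'"]
      short[OF aa(1)] short[OF aa(2)]
      heap_index_ge_1[of a] heap_index_ge_1[of a'] heap_index_inj aa(3,4)
    by (auto simp: walk_from_eq_heap_walk)
  then have "\<exists>i. 2 \<le> i \<and> i < 2 ^ (d + 1) \<and> \<not> fresh_at \<sigma> s i"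
    unfolding fresh_below_def by auto
  then obtain m where m: "2 \<le> m \<and> m < 2 ^ (d + 1) \<and> \<not> fresh_at \<sigma> s m"
    and least: "\<And>k. k < m \<Longrightarrow> \<not> (2 \<le> k \<and> k < 2 ^ (d + 1) \<and> \<not> fresh_at \<sigma> s k)"
    using exists_least_iff[where P = "\<lambda>i. 2 \<le> i \<and> i < 2 ^ (d + 1) \<and> \<not> fresh_at \<sigma> s i"] by blast
  have "fresh_below \<sigma> s m"
    unfolding fresh_below_def using least m by force
  then show ?thesis
    using m by blast
qed

definition collision_bound :: "nat \<Rightarrow> nat \<Rightarrow> real" where
  "collision_bound n d = 2 * 4 ^ (d + 1) / (2 ^ n - 2 ^ (d + 1))"

lemma card_not_short_walks_inj_le:
  assumes n: "0 < n" and s: "s \<in> strs n" and d: "2 ^ (d + 1) < (2::nat) ^ n"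
  shows "real (card {\<sigma> \<in> perms n. \<not> short_walks_inj \<sigma> s d}) \<le> collision_bound n d * real (card (perms n))"
proof -
  define M :: nat where "M = 2 ^ (d + 1)"
  define Bad where "Bad m = {\<sigma> \<in> perms n. fresh_below \<sigma> s m \<and> \<not> fresh_at \<sigma> s m}" for m
  have M: "real M < 2 ^ n"
    using d unfolding M_def by (metis of_nat_less_iff of_nat_numeral of_nat_power)
  have each: "real (card (Bad m)) \<le> 2 * real M * real (card (perms n)) / (2 ^ n - real M)"
    if m: "m \<in> {2..<M}" for m
  proof -
    have "real (card (Bad m)) * (2 ^ n - real M) \<le> real (card (Bad m)) * (2 ^ n - real m)"
      using m by (intro mult_left_mono) auto
    also have "\<dots> \<le> 2 * real (m - 1) * real (card (perms n))"
      unfolding Bad_def by (rule card_first_collision_le[OF n s]) (use m in auto)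
    also have "\<dots> \<le> 2 * real M * real (card (perms n))"
      using m by (intro mult_right_mono) auto
    finally show ?thesis
      using M by (simp add: pos_le_divide_eq)
  qed
  have "{\<sigma> \<in> perms n. \<not> short_walks_inj \<sigma> s d} \<subseteq> (\<Union>m\<in>{2..<M}. Bad m)"
    using not_short_walks_inj_first_collision unfolding Bad_def M_def by fastforce
  then have "card {\<sigma> \<in> perms n. \<not> short_walks_inj \<sigma> s d} \<le> (\<Sum>m\<in>{2..<M}. card (Bad m))"
    by (intro order.trans[OF card_mono card_UN_le]) (auto simp: Bad_def)
  then have "real (card {\<sigma> \<in> perms n. \<not> short_walks_inj \<sigma> s d}) \<le> (\<Sum>m\<in>{2..<M}. real (card (Bad m)))"
    by (metis of_nat_le_iff of_nat_sum)
  also have "\<dots> \<le> (\<Sum>m\<in>{2..<M}. 2 * real M * real (card (perms n)) / (2 ^ n - real M))"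
    by (rule sum_mono) (rule each)
  also have "\<dots> = real (M - 2) * (2 * real M * real (card (perms n)) / (2 ^ n - real M))"
    by simp
  also have "\<dots> \<le> real M * (2 * real M * real (card (perms n)) / (2 ^ n - real M))"
    using M by (intro mult_right_mono) auto
  also have "\<dots> = collision_bound n d * real (card (perms n))"
    by (simp add: collision_bound_def M_def power_mult_distrib[symmetric])
  finally show ?thesis .
qed

section \<open>Swapping the last input of the walk with a random string\<close>

lemma distinct_walk_inputs:
  assumes inj: "short_walks_inj \<sigma> x d" and b: "length bs \<le> d"
  shows "distinct (walk_inputs \<sigma> x bs)"
proof (rule ccontr)
  assume "\<not> distinct (walk_inputs \<sigma> x bs)"
  then obtain i j where ij: "i < length bs" "j < length bs" "i \<noteq> j"
      "walk_inputs \<sigma> x bs ! i = walk_inputs \<sigma> x bs ! j"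
    by (auto simp: distinct_conv_nth)
  have "walk_from \<sigma> x (take (Suc i) bs) = walk_from \<sigma> x (take (Suc j) bs)"
    using ij by (simp add: walk_from_take_Suc)
  moreover have "take (Suc i) bs \<noteq> take (Suc j) bs"
    using ij by (metis Suc_leI length_take min.absorb2 nat.inject)
  ultimately show False
    using inj b unfolding short_walks_inj_def inj_on_def by auto
qed

lemma start_notin_walk_inputs:
  assumes inj: "short_walks_inj \<sigma> (\<sigma> r) d" and b: "length b \<le> d"
  shows "r \<notin> set (walk_inputs \<sigma> (\<sigma> r) b)"
proof
  assume "r \<in> set (walk_inputs \<sigma> (\<sigma> r) b)"
  then obtain j where j: "j < length b" "walk_inputs \<sigma> (\<sigma> r) b ! j = r"
    by (auto simp: in_set_conv_nth)
  then have "walk_from \<sigma> (\<sigma> r) (take (Suc j) b) = walk_from \<sigma> (\<sigma> r) []"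
    by (simp add: walk_from_take_Suc)
  moreover have "take (Suc j) b \<noteq> []"
    using j by (cases b) auto
  ultimately show False
    using b inj_onD[OF inj[unfolded short_walks_inj_def]] by fastforce
qed

text \<open>With u the last input of the walk along a, transposing u and r is harmless when neither
  u nor r is an input of the rest of the walk along a, nor of the walks along b
  started at \<sigma> u and at \<sigma> r: then the transposition exchanges these two walks.\<close>

definition swap_good :: "(nat \<Rightarrow> nat) \<Rightarrow> bool list \<Rightarrow> bool list \<Rightarrow> nat \<Rightarrow> bool" where
  "swap_good \<sigma> a b r \<longleftrightarrow> (let u = last_input \<sigma> a in
     u \<notin> set (walk_inputs \<sigma> 0 (butlast a)) \<and> r \<notin> set (walk_inputs \<sigma> 0 (butlast a)) \<and>
     u \<notin> set (walk_inputs \<sigma> (\<sigma> u) b) \<and> r \<notin> set (walk_inputs \<sigma> (\<sigma> u) b) \<and>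
     u \<notin> set (walk_inputs \<sigma> (\<sigma> r) b) \<and> r \<notin> set (walk_inputs \<sigma> (\<sigma> r) b))"

lemma swap_good_transpose:
  assumes n: "0 < n" and \<sigma>: "\<sigma> permutes strs n" and r: "r \<in> strs n" and good: "swap_good \<sigma> a b r"
  defines "\<sigma>' \<equiv> \<sigma> \<circ> Transposition.transpose (last_input \<sigma> a) r"
  shows "\<sigma>' permutes strs n" and "last_input \<sigma>' a = last_input \<sigma> a" and "swap_good \<sigma>' a b r"
    and "\<sigma>' \<circ> Transposition.transpose (last_input \<sigma>' a) r = \<sigma>"
    and "walk_from \<sigma>' (\<sigma>' r) b = walk_from \<sigma> (\<sigma> (last_input \<sigma> a)) b"
proof -
  define u where "u = last_input \<sigma> a"
  show "\<sigma>' permutes strs n"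
    unfolding \<sigma>'_def using last_input_strs[OF n \<sigma>] r by (intro permutes_compose[OF permutes_swap_id \<sigma>])
  have other: "\<sigma>' v = \<sigma> v" if "v \<noteq> u" "v \<noteq> r" for v
    using that by (simp add: \<sigma>'_def u_def transpose_apply_other)
  have swapped: "\<sigma>' u = \<sigma> r" "\<sigma>' r = \<sigma> u"
    by (simp_all add: \<sigma>'_def u_def)
  have avoid: "u \<notin> set (walk_inputs \<sigma> 0 (butlast a))" "r \<notin> set (walk_inputs \<sigma> 0 (butlast a))"
    "u \<notin> set (walk_inputs \<sigma> (\<sigma> u) b)" "r \<notin> set (walk_inputs \<sigma> (\<sigma> u) b)"
    "u \<notin> set (walk_inputs \<sigma> (\<sigma> r) b)" "r \<notin> set (walk_inputs \<sigma> (\<sigma> r) b)"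
    using good unfolding swap_good_def u_def[symmetric] Let_def by auto
  have prefix: "walk_from \<sigma>' 0 (butlast a) = walk_from \<sigma> 0 (butlast a)
      \<and> walk_inputs \<sigma>' 0 (butlast a) = walk_inputs \<sigma> 0 (butlast a)"
    by (rule walk_from_cong_inputs) (metis avoid(1,2) other)
  then show last: "last_input \<sigma>' a = last_input \<sigma> a"
    by (simp add: last_input_def)
  have from_u: "walk_from \<sigma>' (\<sigma> u) b = walk_from \<sigma> (\<sigma> u) b \<and> walk_inputs \<sigma>' (\<sigma> u) b = walk_inputs \<sigma> (\<sigma> u) b"
    by (rule walk_from_cong_inputs) (metis avoid(3,4) other)
  have from_r: "walk_from \<sigma>' (\<sigma> r) b = walk_from \<sigma> (\<sigma> r) b \<and> walk_inputs \<sigma>' (\<sigma> r) b = walk_inputs \<sigma> (\<sigma> r) b"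
    by (rule walk_from_cong_inputs) (metis avoid(5,6) other)
  show "swap_good \<sigma>' a b r"
    unfolding swap_good_def Let_def last u_def[symmetric] swapped using prefix from_u from_r avoid by auto
  show "\<sigma>' \<circ> Transposition.transpose (last_input \<sigma>' a) r = \<sigma>"
    unfolding last by (simp add: \<sigma>'_def comp_assoc)
  show "walk_from \<sigma>' (\<sigma>' r) b = walk_from \<sigma> (\<sigma> (last_input \<sigma> a)) b"
    using from_u swapped by (simp add: u_def)
qed

lemma swap_goodI:
  assumes a: "a \<noteq> []" and ab: "length a + length b \<le> L"
    and inj0: "short_walks_inj \<sigma> 0 L" and injr: "short_walks_inj \<sigma> (\<sigma> r) (length b)"
    and "r \<notin> set (walk_inputs \<sigma> 0 (butlast a))" "r \<notin> set (walk_inputs \<sigma> (\<sigma> (last_input \<sigma> a)) b)"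
    and "last_input \<sigma> a \<notin> set (walk_inputs \<sigma> (\<sigma> r) b)"
  shows "swap_good \<sigma> a b r"
proof -
  have "distinct (walk_inputs \<sigma> 0 (a @ b))"
    by (rule distinct_walk_inputs[OF inj0]) (use ab in simp)
  then have "last_input \<sigma> a \<notin> set (walk_inputs \<sigma> 0 (butlast a))"
    "last_input \<sigma> a \<notin> set (walk_inputs \<sigma> (\<sigma> (last_input \<sigma> a)) b)"
    unfolding walk_inputs_append_last[OF a] by auto
  moreover have "r \<notin> set (walk_inputs \<sigma> (\<sigma> r) b)"
    by (rule start_notin_walk_inputs[OF injr]) simp
  ultimately show ?thesis
    using assms unfolding swap_good_def Let_def by auto
qed

lemma abs_sum_diff_le_involution:
  fixes f g c :: "'a \<Rightarrow> real"
  assumes P: "finite P" "G \<subseteq> P"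
    and \<Phi>: "\<And>x. x \<in> G \<Longrightarrow> \<Phi> x \<in> G \<and> \<Phi> (\<Phi> x) = x"
    and close: "\<And>x. x \<in> G \<Longrightarrow> \<bar>f x - g (\<Phi> x)\<bar> \<le> c (\<Phi> x)"
    and bounded: "\<And>x. x \<in> P \<Longrightarrow> \<bar>f x\<bar> \<le> 1" "\<And>x. x \<in> P \<Longrightarrow> \<bar>g x\<bar> \<le> 1"
    and c: "\<And>x. x \<in> P \<Longrightarrow> 0 \<le> c x"
  shows "\<bar>(\<Sum>x\<in>P. f x) - (\<Sum>x\<in>P. g x)\<bar> \<le> (\<Sum>x\<in>P. c x) + 2 * real (card (P - G))"
proof -
  have split: "(\<Sum>x\<in>P. h x) = (\<Sum>x\<in>G. h x) + (\<Sum>x\<in>P - G. h x)" for h :: "'a \<Rightarrow> real"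
    using P by (metis sum.subset_diff add.commute)
  have "(\<Sum>x\<in>G. g x) = (\<Sum>x\<in>G. g (\<Phi> x))" "(\<Sum>x\<in>G. c x) = (\<Sum>x\<in>G. c (\<Phi> x))"
    by (rule sum.reindex_bij_witness[where i = \<Phi> and j = \<Phi>]; use \<Phi> in auto)+
  then have "\<bar>(\<Sum>x\<in>G. f x) - (\<Sum>x\<in>G. g x)\<bar> \<le> (\<Sum>x\<in>G. c x)"
    using sum_abs[of "\<lambda>x. f x - g (\<Phi> x)" G] sum_mono[of G "\<lambda>x. \<bar>f x - g (\<Phi> x)\<bar>" "\<lambda>x. c (\<Phi> x)"] close
    by (simp add: sum_subtractf)
  also have "\<dots> \<le> (\<Sum>x\<in>P. c x)"
    using P c by (intro sum_mono2) auto
  finally have on_G: "\<bar>(\<Sum>x\<in>G. f x) - (\<Sum>x\<in>G. g x)\<bar> \<le> (\<Sum>x\<in>P. c x)" .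
  have "\<bar>(\<Sum>x\<in>P - G. f x) - (\<Sum>x\<in>P - G. g x)\<bar> \<le> (\<Sum>x\<in>P - G. \<bar>f x\<bar> + \<bar>g x\<bar>)"
    unfolding sum_subtractf[symmetric] by (intro order.trans[OF sum_abs] sum_mono) auto
  also have "\<dots> \<le> (\<Sum>x\<in>P - G. 2)"
    using bounded by (intro sum_mono) (smt (verit) DiffD1)
  finally have off_G: "\<bar>(\<Sum>x\<in>P - G. f x) - (\<Sum>x\<in>P - G. g x)\<bar> \<le> 2 * real (card (P - G))"
    by simp
  show ?thesis
    using on_G off_G unfolding split[of f] split[of g] by linarith
qed

definition swap_cost :: "nat \<Rightarrow> nat \<Rightarrow> nat \<Rightarrow> (nat \<Rightarrow> nat \<Rightarrow> qmat) \<Rightarrow> (nat \<Rightarrow> nat \<Rightarrow> bool)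
    \<Rightarrow> (nat \<Rightarrow> nat) \<Rightarrow> bool list \<Rightarrow> bool list \<Rightarrow> nat \<Rightarrow> real" where
  "swap_cost n m T U ch \<sigma> a b r = (let y = walk_from \<sigma> (\<sigma> r) b; u = last_input \<sigma> a in
     4 * (\<Sum>t<T. sqrt (query_mass n m U ch \<sigma> y t u) + sqrt (query_mass n m U ch \<sigma> y t r)
                   + sqrt (query_mass n m U ch \<sigma> y t (\<sigma> u)) + sqrt (query_mass n m U ch \<sigma> y t (\<sigma> r))))"

lemma swap_cost_nonneg: "0 \<le> swap_cost n m T U ch \<sigma> a b r"
  unfolding swap_cost_def Let_def
  by (intro mult_nonneg_nonneg sum_nonneg add_nonneg_nonneg) (auto simp: query_mass_nonneg)

lemma perms_permutes: "\<sigma> \<in> perms n \<Longrightarrow> \<sigma> permutes strs n"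
  by (simp add: perms_def)

lemma walk_from_image_strs:
  "0 < n \<Longrightarrow> \<sigma> \<in> perms n \<Longrightarrow> r \<in> strs n \<Longrightarrow> walk_from \<sigma> (\<sigma> r) b \<in> strs n"
  by (intro walk_from_strs) (auto simp: perms_permutes permutes_in_image)

lemma sum_accept_prob_swap_diff_le:
  assumes n: "0 < n" and V: "valid_alg n m T U" and r: "r \<in> strs n"
  shows "\<bar>(\<Sum>\<sigma>\<in>perms n. accept_prob n m T U ch Acc \<sigma> (walk_from \<sigma> (\<sigma> (last_input \<sigma> a)) b))
         - (\<Sum>\<sigma>\<in>perms n. accept_prob n m T U ch Acc \<sigma> (walk_from \<sigma> (\<sigma> r) b))\<bar>
    \<le> (\<Sum>\<sigma>\<in>perms n. swap_cost n m T U ch \<sigma> a b r) + 2 * real (card {\<sigma> \<in> perms n. \<not> swap_good \<sigma> a b r})"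
proof -
  let ?A = "accept_prob n m T U ch Acc"
  define G where "G = {\<sigma> \<in> perms n. swap_good \<sigma> a b r}"
  define \<Phi> where "\<Phi> \<sigma> = \<sigma> \<circ> Transposition.transpose (last_input \<sigma> a) r" for \<sigma>
  have G: "\<sigma> permutes strs n" "swap_good \<sigma> a b r" if "\<sigma> \<in> G" for \<sigma>
    using that by (auto simp: G_def perms_def)
  have "\<bar>(\<Sum>\<sigma>\<in>perms n. ?A \<sigma> (walk_from \<sigma> (\<sigma> (last_input \<sigma> a)) b))
         - (\<Sum>\<sigma>\<in>perms n. ?A \<sigma> (walk_from \<sigma> (\<sigma> r) b))\<bar>
      \<le> (\<Sum>\<sigma>\<in>perms n. swap_cost n m T U ch \<sigma> a b r) + 2 * real (card (perms n - G))"
  proof (rule abs_sum_diff_le_involution)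
    show "\<Phi> \<sigma> \<in> G \<and> \<Phi> (\<Phi> \<sigma>) = \<sigma>" if "\<sigma> \<in> G" for \<sigma>
      using swap_good_transpose(1-4)[OF n G(1)[OF that] r G(2)[OF that]] by (auto simp: \<Phi>_def G_def perms_def)
    show "\<bar>?A \<sigma> (walk_from \<sigma> (\<sigma> (last_input \<sigma> a)) b) - ?A (\<Phi> \<sigma>) (walk_from (\<Phi> \<sigma>) (\<Phi> \<sigma> r) b)\<bar>
        \<le> swap_cost n m T U ch (\<Phi> \<sigma>) a b r" if "\<sigma> \<in> G" for \<sigma>
    proof -
      note swap = swap_good_transpose[OF n G(1)[OF that] r G(2)[OF that], folded \<Phi>_def]
      have "\<bar>?A (\<Phi> \<sigma> \<circ> Transposition.transpose (last_input (\<Phi> \<sigma>) a) r) (walk_from (\<Phi> \<sigma>) (\<Phi> \<sigma> r) b)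
          - ?A (\<Phi> \<sigma>) (walk_from (\<Phi> \<sigma>) (\<Phi> \<sigma> r) b)\<bar> \<le> swap_cost n m T U ch (\<Phi> \<sigma>) a b r"
        unfolding swap_cost_def Let_def
        using swap(1) n r walk_from_strs[OF n swap(1), of "\<Phi> \<sigma> r"] permutes_in_image[OF swap(1)]
        by (intro accept_prob_transpose_diff_le[OF V _ swap(1) last_input_strs[OF n swap(1)] r]) auto
      moreover have "\<Phi> \<sigma> \<circ> Transposition.transpose (last_input (\<Phi> \<sigma>) a) r = \<sigma>"
        using swap(4) by (simp add: \<Phi>_def)
      ultimately show ?thesis
        using swap(5) by simp
    qed
    show "\<bar>?A \<sigma> (walk_from \<sigma> (\<sigma> (last_input \<sigma> a)) b)\<bar> \<le> 1" "\<bar>?A \<sigma> (walk_from \<sigma> (\<sigma> r) b)\<bar> \<le> 1"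
      if "\<sigma> \<in> perms n" for \<sigma>
      using accept_prob_bounds[OF V _ perms_permutes[OF that]] walk_from_image_strs[OF n that]
        last_input_strs[OF n perms_permutes[OF that]] r
      by (metis abs_of_nonneg)+
  qed (auto simp: G_def swap_cost_nonneg)
  also have "perms n - G = {\<sigma> \<in> perms n. \<not> swap_good \<sigma> a b r}"
    by (auto simp: G_def)
  finally show ?thesis .
qed

lemma card_starts_hitting_le:
  assumes n: "0 < n" and \<sigma>: "\<sigma> permutes strs n"
  shows "card {r \<in> strs n. u \<in> set (walk_inputs \<sigma> (\<sigma> r) b)} \<le> length b"
proof -
  have at_most_one: "card {r \<in> strs n. walk_inputs \<sigma> (\<sigma> r) b ! j = u} \<le> 1" if j: "j < length b" for j
  proof -
    have "inj_on (\<lambda>r. walk_inputs \<sigma> (\<sigma> r) b ! j) (strs n)"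
    proof (rule inj_onI)
      fix r r'
      assume rr: "r \<in> strs n" "r' \<in> strs n" "walk_inputs \<sigma> (\<sigma> r) b ! j = walk_inputs \<sigma> (\<sigma> r') b ! j"
      then have "walk_from \<sigma> (\<sigma> r) (take j b) = walk_from \<sigma> (\<sigma> r') (take j b)"
        using j by (simp add: nth_walk_inputs step_input_eq_iff)
      then have "\<sigma> r = \<sigma> r'"
        using inj_on_walk_from[OF \<sigma> n, of "take j b"] rr \<sigma> by (auto simp: permutes_in_image dest: inj_onD)
      then show "r = r'"
        using permutes_inj[OF \<sigma>] by (auto dest: injD)
    qed
    then show ?thesis
      using card_le_Suc0_iff_eq[of "{r \<in> strs n. walk_inputs \<sigma> (\<sigma> r) b ! j = u}"]
      by (auto dest: inj_onD)
  qed
  have "card {r \<in> strs n. u \<in> set (walk_inputs \<sigma> (\<sigma> r) b)}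
      \<le> card (\<Union>j<length b. {r \<in> strs n. walk_inputs \<sigma> (\<sigma> r) b ! j = u})"
    by (rule card_mono) (auto simp: in_set_conv_nth)
  also have "\<dots> \<le> (\<Sum>j<length b. card {r \<in> strs n. walk_inputs \<sigma> (\<sigma> r) b ! j = u})"
    by (rule card_UN_le) simp
  also have "\<dots> \<le> (\<Sum>j<length b. 1)"
    by (rule sum_mono) (rule at_most_one, simp)
  finally show ?thesis
    by simp
qed

lemma card_filter_eq_sum_of_bool: "finite A \<Longrightarrow> card {x \<in> A. P x} = (\<Sum>x\<in>A. of_bool (P x))"
  by (simp add: Int_def)

lemma sum_card_filter_swap:
  "finite A \<Longrightarrow> finite B \<Longrightarrow> (\<Sum>x\<in>A. card {y \<in> B. P x y}) = (\<Sum>y\<in>B. card {x \<in> A. P x y})"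
  by (simp only: card_filter_eq_sum_of_bool) (rule sum.swap)

lemma card_filter_comp_permutes:
  assumes \<sigma>: "\<sigma> permutes S"
  shows "card {r \<in> S. P (\<sigma> r)} = card {x \<in> S. P x}"
proof -
  have "\<sigma> ` {r \<in> S. P (\<sigma> r)} = {x \<in> S. P x}"
  proof
    show "\<sigma> ` {r \<in> S. P (\<sigma> r)} \<subseteq> {x \<in> S. P x}"
      using permutes_in_image[OF \<sigma>] by auto
    show "{x \<in> S. P x} \<subseteq> \<sigma> ` {r \<in> S. P (\<sigma> r)}"
    proof
      fix x
      assume "x \<in> {x \<in> S. P x}"
      then show "x \<in> \<sigma> ` {r \<in> S. P (\<sigma> r)}"
        using permutes_inverses(1)[OF \<sigma>, of x] permutes_in_image[OF permutes_inv[OF \<sigma>], of x]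
        by (metis (mono_tags, lifting) image_eqI mem_Collect_eq)
    qed
  qed
  then show ?thesis
    using card_image[OF inj_on_subset[OF permutes_inj[OF \<sigma>] subset_UNIV]] by metis
qed

lemma sum_card_not_short_walks_inj_image_le:
  assumes n: "0 < n" and L: "2 ^ (L + 1) < (2::nat) ^ n"
  shows "(\<Sum>\<sigma>\<in>perms n. real (card {r \<in> strs n. \<not> short_walks_inj \<sigma> (\<sigma> r) L}))
    \<le> 2 ^ n * collision_bound n L * real (card (perms n))"
proof -
  have image: "card {r \<in> strs n. \<not> short_walks_inj \<sigma> (\<sigma> r) L} = card {x \<in> strs n. \<not> short_walks_inj \<sigma> x L}"
    if "\<sigma> \<in> perms n" for \<sigma>
    by (rule card_filter_comp_permutes[OF perms_permutes[OF that]])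
  have "(\<Sum>\<sigma>\<in>perms n. card {r \<in> strs n. \<not> short_walks_inj \<sigma> (\<sigma> r) L})
      = (\<Sum>\<sigma>\<in>perms n. card {x \<in> strs n. \<not> short_walks_inj \<sigma> x L})"
    using image by (rule sum.cong[OF refl])
  also have "\<dots> = (\<Sum>x\<in>strs n. card {\<sigma> \<in> perms n. \<not> short_walks_inj \<sigma> x L})"
    by (rule sum_card_filter_swap) simp_all
  finally have eq: "(\<Sum>\<sigma>\<in>perms n. card {r \<in> strs n. \<not> short_walks_inj \<sigma> (\<sigma> r) L})
      = (\<Sum>x\<in>strs n. card {\<sigma> \<in> perms n. \<not> short_walks_inj \<sigma> x L})" .
  have "(\<Sum>\<sigma>\<in>perms n. real (card {r \<in> strs n. \<not> short_walks_inj \<sigma> (\<sigma> r) L}))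
      = (\<Sum>x\<in>strs n. real (card {\<sigma> \<in> perms n. \<not> short_walks_inj \<sigma> x L}))"
    unfolding of_nat_sum[symmetric] eq ..
  also have "\<dots> \<le> (\<Sum>x\<in>strs n. collision_bound n L * real (card (perms n)))"
    by (intro sum_mono card_not_short_walks_inj_le[OF n _ L])
  finally show ?thesis
    by simp
qed

lemma card_not_swap_good_le:
  assumes n: "0 < n" and \<sigma>: "\<sigma> permutes strs n" and a: "a \<noteq> []" and ab: "length a + length b \<le> L"
  shows "real (card {r \<in> strs n. \<not> swap_good \<sigma> a b r})
    \<le> 2 ^ n * of_bool (\<not> short_walks_inj \<sigma> 0 L)
      + real (card {r \<in> strs n. \<not> short_walks_inj \<sigma> (\<sigma> r) L}) + 3 * real L"
proof (cases "short_walks_inj \<sigma> 0 L")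
  case False
  have "card {r \<in> strs n. \<not> swap_good \<sigma> a b r} \<le> card (strs n)"
    by (rule card_mono) auto
  then have "real (card {r \<in> strs n. \<not> swap_good \<sigma> a b r}) \<le> 2 ^ n"
    by simp
  moreover have "0 \<le> real (card {r \<in> strs n. \<not> short_walks_inj \<sigma> (\<sigma> r) L})" "0 \<le> real L"
    by simp_all
  moreover have "2 ^ n * of_bool (\<not> short_walks_inj \<sigma> 0 L) = (2::real) ^ n"
    using False by simp
  ultimately show ?thesis
    by linarith
next
  case True
  let ?u = "last_input \<sigma> a"
  let ?I = "{r \<in> strs n. \<not> short_walks_inj \<sigma> (\<sigma> r) L}"
  let ?H = "{r \<in> strs n. ?u \<in> set (walk_inputs \<sigma> (\<sigma> r) b)}"
  let ?S1 = "set (walk_inputs \<sigma> 0 (butlast a))" and ?S2 = "set (walk_inputs \<sigma> (\<sigma> ?u) b)"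
  have "{r \<in> strs n. \<not> swap_good \<sigma> a b r} \<subseteq> ?I \<union> ?S1 \<union> ?S2 \<union> ?H"
    using swap_goodI[OF a ab True short_walks_inj_mono] ab by auto
  then have "card {r \<in> strs n. \<not> swap_good \<sigma> a b r} \<le> card (?I \<union> ?S1 \<union> ?S2 \<union> ?H)"
    by (intro card_mono) auto
  also have "\<dots> \<le> card (?I \<union> ?S1 \<union> ?S2) + card ?H"
    by (rule card_Un_le)
  also have "\<dots> \<le> card ?I + card ?S1 + card ?S2 + card ?H"
    using card_Un_le[of "?I \<union> ?S1" ?S2] card_Un_le[of ?I ?S1] by linarith
  also have "\<dots> \<le> card ?I + L + L + L"
    using card_length[of "walk_inputs \<sigma> 0 (butlast a)"] card_length[of "walk_inputs \<sigma> (\<sigma> ?u) b"]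
      card_starts_hitting_le[OF n \<sigma>, of ?u b] ab
    by simp
  finally have "real (card {r \<in> strs n. \<not> swap_good \<sigma> a b r}) \<le> real (card ?I + 3 * L)"
    by (intro of_nat_mono) simp
  then show ?thesis
    using True by simp
qed

lemma sum_card_not_swap_good_le:
  assumes n: "0 < n" and a: "a \<noteq> []" and ab: "length a + length b \<le> L"
    and L: "2 ^ (L + 1) < (2::nat) ^ n"
  shows "(\<Sum>r\<in>strs n. real (card {\<sigma> \<in> perms n. \<not> swap_good \<sigma> a b r}))
    \<le> real (card (perms n)) * (2 * 2 ^ n * collision_bound n L + 3 * real L)"
proof -
  have "(\<Sum>r\<in>strs n. card {\<sigma> \<in> perms n. \<not> swap_good \<sigma> a b r})
      = (\<Sum>\<sigma>\<in>perms n. card {r \<in> strs n. \<not> swap_good \<sigma> a b r})"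
    by (rule sum_card_filter_swap) simp_all
  then have "(\<Sum>r\<in>strs n. real (card {\<sigma> \<in> perms n. \<not> swap_good \<sigma> a b r}))
      = (\<Sum>\<sigma>\<in>perms n. real (card {r \<in> strs n. \<not> swap_good \<sigma> a b r}))"
    unfolding of_nat_sum[symmetric] by (rule arg_cong)
  also have "\<dots> \<le> (\<Sum>\<sigma>\<in>perms n. 2 ^ n * of_bool (\<not> short_walks_inj \<sigma> 0 L)
      + real (card {r \<in> strs n. \<not> short_walks_inj \<sigma> (\<sigma> r) L}) + 3 * real L)"
    by (intro sum_mono card_not_swap_good_le[OF n perms_permutes a ab])
  also have "\<dots> = 2 ^ n * real (card {\<sigma> \<in> perms n. \<not> short_walks_inj \<sigma> 0 L})
      + (\<Sum>\<sigma>\<in>perms n. real (card {r \<in> strs n. \<not> short_walks_inj \<sigma> (\<sigma> r) L}))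
      + 3 * real L * real (card (perms n))"
    by (simp add: sum.distrib sum_distrib_left[symmetric] Int_def)
  also have "\<dots> \<le> 2 ^ n * (collision_bound n L * real (card (perms n)))
      + 2 ^ n * collision_bound n L * real (card (perms n)) + 3 * real L * real (card (perms n))"
    using card_not_short_walks_inj_le[OF n zero_strs L] sum_card_not_short_walks_inj_image_le[OF n L]
    by (intro add_mono mult_left_mono) auto
  finally show ?thesis
    by (simp add: algebra_simps)
qed

section \<open>Averaging over walks, strings and permutations\<close>

lemma card_bool_lists: "card {xs :: bool list. length xs = k} = 2 ^ k"
  using card_lists_length_eq[of "UNIV :: bool set" k] by simp

lemma finite_bool_lists [simp]: "finite {xs :: bool list. length xs = k}"
  by (rule finite_list_length)

lemma sum_bool_lists_le:
  fixes g :: "nat \<Rightarrow> real" and h :: "bool list \<Rightarrow> nat"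
  assumes S: "finite S" and h: "\<And>a. length a = k \<Longrightarrow> h a \<in> S"
    and g: "\<And>x. x \<in> S \<Longrightarrow> 0 \<le> g x" "\<And>x. x \<in> S \<Longrightarrow> g x \<le> 1"
  shows "(\<Sum>a\<in>{a. length a = k}. g (h a)) \<le> (\<Sum>x\<in>S. g x) + 2 ^ k * of_bool (\<not> inj_on h {a. length a = k})"
proof (cases "inj_on h {a. length a = k}")
  case True
  then have "(\<Sum>a\<in>{a. length a = k}. g (h a)) = (\<Sum>x\<in>h ` {a. length a = k}. g x)"
    by (simp add: sum.reindex)
  also have "\<dots> \<le> (\<Sum>x\<in>S. g x)"
    using S h g by (intro sum_mono2) auto
  finally show ?thesis
    using True by simp
next
  case False
  have "(\<Sum>a\<in>{a. length a = k}. g (h a)) \<le> (\<Sum>a\<in>{a::bool list. length a = k}. 1)"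
    using h g(2) by (intro sum_mono) simp
  then show ?thesis
    using False g sum_nonneg[of S g] by (simp add: card_bool_lists)
qed

lemma inj_on_last_input:
  assumes "short_walks_inj \<sigma> 0 L" "1 \<le> k" "k \<le> L"
  shows "inj_on (\<lambda>a. \<sigma> (last_input \<sigma> a)) {a. length a = k}"
proof (rule inj_onI)
  fix a a'
  assume a: "a \<in> {a. length a = k}" "a' \<in> {a. length a = k}" "\<sigma> (last_input \<sigma> a) = \<sigma> (last_input \<sigma> a')"
  moreover have "a \<noteq> []" "a' \<noteq> []"
    using a assms(2) by auto
  ultimately have "walk_from \<sigma> 0 a = walk_from \<sigma> 0 a'"
    by (simp add: walk_from_last_input)
  then show "a = a'"
    using assms a unfolding short_walks_inj_def by (auto dest: inj_onD)
qed

lemma sum_query_mass_last_input_le: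
  assumes n: "0 < n" and V: "valid_alg n m T U" and y: "y \<in> strs n" and \<sigma>: "\<sigma> permutes strs n"
    and t: "t \<le> T" and k: "1 \<le> k" "k \<le> L" and h: "h = last_input \<sigma> \<or> h = (\<lambda>a. \<sigma> (last_input \<sigma> a))"
  shows "(\<Sum>a\<in>{a. length a = k}. query_mass n m U ch \<sigma> y t (h a))
    \<le> 1 + 2 ^ k * of_bool (\<not> short_walks_inj \<sigma> 0 L)"
proof -
  have "inj_on h {a. length a = k}" if "short_walks_inj \<sigma> 0 L"
  proof -
    have inj: "inj_on (\<lambda>a. \<sigma> (last_input \<sigma> a)) {a. length a = k}"
      by (rule inj_on_last_input[OF that k])
    then have "inj_on (last_input \<sigma>) {a. length a = k}"
      using inj_on_imageI2[of \<sigma> "last_input \<sigma>" "{a. length a = k}"] by (simp add: comp_def)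
    with inj h show ?thesis
      by auto
  qed
  then have inj: "2 ^ k * of_bool (\<not> inj_on h {a. length a = k}) \<le> 2 ^ k * (of_bool (\<not> short_walks_inj \<sigma> 0 L) :: real)"
    by (intro mult_left_mono) auto
  have "h a \<in> strs n" for a
    using h last_input_strs[OF n \<sigma>] \<sigma> by (auto simp: permutes_in_image)
  then have "(\<Sum>a\<in>{a. length a = k}. query_mass n m U ch \<sigma> y t (h a))
      \<le> (\<Sum>x\<in>strs n. query_mass n m U ch \<sigma> y t x) + 2 ^ k * of_bool (\<not> inj_on h {a. length a = k})"
    using query_mass_le_1[OF V y \<sigma> t] by (intro sum_bool_lists_le) (auto simp: query_mass_nonneg)
  then show ?thesis
    using sum_query_mass_le[OF V y \<sigma> t, where ch = ch] inj by linarith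
qed

lemma sum_query_mass_walks_from_le:
  assumes n: "0 < n" and V: "valid_alg n m T U" and \<sigma>: "\<sigma> permutes strs n" and t: "t \<le> T"
    and K: "K \<le> L" and s: "s \<in> strs n" and x: "x \<in> strs n"
  shows "(\<Sum>b\<in>{b. length b = K}. query_mass n m U ch \<sigma> (walk_from \<sigma> s b) t x)
    \<le> (\<Sum>y\<in>strs n. query_mass n m U ch \<sigma> y t x) + 2 ^ K * of_bool (\<not> short_walks_inj \<sigma> s L)"
proof -
  have "short_walks_inj \<sigma> s L \<Longrightarrow> inj_on (walk_from \<sigma> s) {b. length b = K}"
    using K unfolding short_walks_inj_def by (auto intro: inj_on_subset)
  then have inj: "2 ^ K * of_bool (\<not> inj_on (walk_from \<sigma> s) {b. length b = K})
      \<le> 2 ^ K * (of_bool (\<not> short_walks_inj \<sigma> s L) :: real)"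
    by (intro mult_left_mono) auto
  have "(\<Sum>b\<in>{b. length b = K}. query_mass n m U ch \<sigma> (walk_from \<sigma> s b) t x)
      \<le> (\<Sum>y\<in>strs n. query_mass n m U ch \<sigma> y t x) + 2 ^ K * of_bool (\<not> inj_on (walk_from \<sigma> s) {b. length b = K})"
    using query_mass_le_1[OF V _ \<sigma> t x] walk_from_strs[OF n \<sigma> s]
    by (intro sum_bool_lists_le) (auto simp: query_mass_nonneg)
  then show ?thesis
    using inj by linarith
qed

lemma sum_query_mass_walk_start_le:
  assumes n: "0 < n" and V: "valid_alg n m T U" and \<sigma>: "\<sigma> permutes strs n" and t: "t \<le> T"
    and K: "K \<le> L" and h: "bij_betw h (strs n) (strs n)"
  shows "(\<Sum>r\<in>strs n. \<Sum>b\<in>{b. length b = K}. query_mass n m U ch \<sigma> (walk_from \<sigma> (\<sigma> r) b) t (h r))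
    \<le> 2 ^ n + 2 ^ K * real (card {r \<in> strs n. \<not> short_walks_inj \<sigma> (\<sigma> r) L})"
proof -
  let ?q = "\<lambda>y x. query_mass n m U ch \<sigma> y t x"
  let ?bad = "\<lambda>r. of_bool (\<not> short_walks_inj \<sigma> (\<sigma> r) L) :: real"
  have "(\<Sum>r\<in>strs n. \<Sum>b\<in>{b. length b = K}. ?q (walk_from \<sigma> (\<sigma> r) b) (h r))
      \<le> (\<Sum>r\<in>strs n. (\<Sum>y\<in>strs n. ?q y (h r)) + 2 ^ K * ?bad r)"
    using h \<sigma> by (intro sum_mono sum_query_mass_walks_from_le[OF n V \<sigma> t K])
      (auto dest: bij_betwE simp: permutes_in_image)
  also have "\<dots> = (\<Sum>r\<in>strs n. \<Sum>y\<in>strs n. ?q y (h r)) + 2 ^ K * (\<Sum>r\<in>strs n. ?bad r)"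
    by (simp add: sum.distrib sum_distrib_left)
  also have "(\<Sum>r\<in>strs n. \<Sum>y\<in>strs n. ?q y (h r)) = (\<Sum>y\<in>strs n. \<Sum>x\<in>strs n. ?q y x)"
    using sum.reindex_bij_betw[OF h] by (subst sum.swap) simp
  also have "\<dots> \<le> (\<Sum>y\<in>strs n. 1)"
    using sum_query_mass_le[OF V _ \<sigma> t] by (intro sum_mono) auto
  also have "(\<Sum>r\<in>strs n. ?bad r) = real (card {r \<in> strs n. \<not> short_walks_inj \<sigma> (\<sigma> r) L})"
    by (simp add: Int_def)
  finally show ?thesis
    by simp
qed

lemma sum4_cartesian:
  "(\<Sum>a\<in>A. \<Sum>b\<in>B. \<Sum>c\<in>C. \<Sum>d\<in>D. g a b c d)
    = (\<Sum>x\<in>A \<times> B \<times> C \<times> D. g (fst x) (fst (snd x)) (fst (snd (snd x))) (snd (snd (snd x))))"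
  by (simp add: sum.cartesian_product split_def)

lemma sum4_swap:
  "(\<Sum>a\<in>A. \<Sum>b\<in>B. \<Sum>c\<in>C. \<Sum>d\<in>D. g a b c d) = (\<Sum>d\<in>D. \<Sum>c\<in>C. \<Sum>b\<in>B. \<Sum>a\<in>A. g a b c d)"
proof -
  have "(\<Sum>x\<in>A \<times> B \<times> C \<times> D. g (fst x) (fst (snd x)) (fst (snd (snd x))) (snd (snd (snd x))))
      = (\<Sum>y\<in>D \<times> C \<times> B \<times> A. g (snd (snd (snd y))) (fst (snd (snd y))) (fst (snd y)) (fst y))"
    by (rule sum.reindex_bij_witness[where i = "\<lambda>(d, c, b, a). (a, b, c, d)" and j = "\<lambda>(a, b, c, d). (d, c, b, a)"])
      auto
  then show ?thesis
    unfolding sum4_cartesian by simp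
qed

lemma sum_sqrt_le_sqrt_card_mult_sum:
  assumes "\<And>x. x \<in> I \<Longrightarrow> 0 \<le> f x"
  shows "(\<Sum>x\<in>I. sqrt (f x)) \<le> sqrt (real (card I) * (\<Sum>x\<in>I. f x))"
proof -
  have "(\<Sum>x\<in>I. sqrt (f x)) = (\<Sum>x\<in>I. \<bar>sqrt (f x)\<bar> * \<bar>1\<bar>)"
    using assms by simp
  also have "\<dots> \<le> L2_set (\<lambda>x. sqrt (f x)) I * L2_set (\<lambda>x. 1) I"
    by (rule L2_set_mult_ineq)
  also have "L2_set (\<lambda>x. sqrt (f x)) I = sqrt (\<Sum>x\<in>I. f x)"
    unfolding L2_set_def using assms by (simp cong: sum.cong)
  also have "L2_set (\<lambda>x. 1) I = sqrt (real (card I))"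
    by (simp add: L2_set_constant)
  finally show ?thesis
    by (simp add: real_sqrt_mult mult.commute)
qed

lemma card_perms_pos: "0 < card (perms n)"
proof -
  have "id \<in> perms n"
    by (simp add: perms_def permutes_id)
  then show ?thesis
    using finite_perms card_gt_0_iff by blast
qed

locale split_walk =
  fixes n m T :: nat and U :: "nat \<Rightarrow> nat \<Rightarrow> qmat" and ch :: "nat \<Rightarrow> nat \<Rightarrow> bool"
    and Acc :: "nat \<Rightarrow> (nat \<times> nat \<times> nat) set" and L k K :: nat
  assumes n_pos: "0 < n" and V: "valid_alg n m T U" and k_pos: "1 \<le> k" and k_le_K: "k \<le> K"
    and L_eq: "k + K = L" and L_small: "2 ^ (L + 1) < (2::nat) ^ n"
begin

abbreviation "As \<equiv> {a :: bool list. length a = k}"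
abbreviation "Bs \<equiv> {b :: bool list. length b = K}"
abbreviation "acc \<equiv> accept_prob n m T U ch Acc"

definition n_tuples :: real where
  "n_tuples = 2 ^ k * 2 ^ K * 2 ^ n * real (card (perms n))"

lemma two_pow_L: "(2::real) ^ L = 2 ^ k * 2 ^ K"
  using L_eq by (simp add: power_add[symmetric])

lemma n_tuples_eq: "n_tuples = 2 ^ L * 2 ^ n * real (card (perms n))"
  by (simp add: n_tuples_def two_pow_L)

lemma n_tuples_nonneg: "0 \<le> n_tuples"
  by (simp add: n_tuples_def)

lemma sum4_query_mass_last_input_le:
  assumes t: "t \<le> T" and h: "\<And>\<sigma>. hh \<sigma> = last_input \<sigma> \<or> hh \<sigma> = (\<lambda>a. \<sigma> (last_input \<sigma> a))"
  shows "(\<Sum>a\<in>As. \<Sum>b\<in>Bs. \<Sum>r\<in>strs n. \<Sum>\<sigma>\<in>perms n. query_mass n m U ch \<sigma> (walk_from \<sigma> (\<sigma> r) b) t (hh \<sigma> a))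
    \<le> n_tuples * (1 / 2 ^ k + collision_bound n L)"
proof -
  have "(\<Sum>a\<in>As. \<Sum>b\<in>Bs. \<Sum>r\<in>strs n. \<Sum>\<sigma>\<in>perms n. query_mass n m U ch \<sigma> (walk_from \<sigma> (\<sigma> r) b) t (hh \<sigma> a))
      = (\<Sum>\<sigma>\<in>perms n. \<Sum>r\<in>strs n. \<Sum>b\<in>Bs. \<Sum>a\<in>As. query_mass n m U ch \<sigma> (walk_from \<sigma> (\<sigma> r) b) t (hh \<sigma> a))"
    by (rule sum4_swap)
  also have "\<dots> \<le> (\<Sum>\<sigma>\<in>perms n. \<Sum>r\<in>strs n. \<Sum>b\<in>Bs. 1 + 2 ^ k * of_bool (\<not> short_walks_inj \<sigma> 0 L))"
    using k_pos L_eq walk_from_image_strs[OF n_pos]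
    by (intro sum_mono sum_query_mass_last_input_le[OF n_pos V _ perms_permutes t _ _ h]) auto
  also have "\<dots> = (\<Sum>\<sigma>\<in>perms n. 2 ^ n * 2 ^ K * (1 + 2 ^ k * of_bool (\<not> short_walks_inj \<sigma> 0 L)))"
    by (simp add: card_bool_lists mult.assoc)
  also have "\<dots> = 2 ^ n * 2 ^ K * (real (card (perms n)) + 2 ^ k * real (card {\<sigma> \<in> perms n. \<not> short_walks_inj \<sigma> 0 L}))"
    by (simp add: sum.distrib sum_distrib_left[symmetric] Int_def)
  also have "\<dots> \<le> 2 ^ n * 2 ^ K * (real (card (perms n)) + 2 ^ k * (collision_bound n L * real (card (perms n))))"
    using card_not_short_walks_inj_le[OF n_pos zero_strs L_small] by (intro mult_left_mono add_left_mono) auto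
  also have "\<dots> = n_tuples * (1 / 2 ^ k + collision_bound n L)"
    by (simp add: n_tuples_def field_simps)
  finally show ?thesis .
qed

lemma sum4_query_mass_start_le:
  assumes t: "t \<le> T" and h: "\<And>\<sigma>. \<sigma> \<in> perms n \<Longrightarrow> bij_betw (hh \<sigma>) (strs n) (strs n)"
  shows "(\<Sum>a\<in>As. \<Sum>b\<in>Bs. \<Sum>r\<in>strs n. \<Sum>\<sigma>\<in>perms n. query_mass n m U ch \<sigma> (walk_from \<sigma> (\<sigma> r) b) t (hh \<sigma> r))
    \<le> n_tuples * (1 / 2 ^ K + collision_bound n L)"
proof -
  have "(\<Sum>a\<in>As. \<Sum>b\<in>Bs. \<Sum>r\<in>strs n. \<Sum>\<sigma>\<in>perms n. query_mass n m U ch \<sigma> (walk_from \<sigma> (\<sigma> r) b) t (hh \<sigma> r))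
      = (\<Sum>\<sigma>\<in>perms n. \<Sum>r\<in>strs n. \<Sum>b\<in>Bs. \<Sum>a\<in>As. query_mass n m U ch \<sigma> (walk_from \<sigma> (\<sigma> r) b) t (hh \<sigma> r))"
    by (rule sum4_swap)
  also have "\<dots> = 2 ^ k * (\<Sum>\<sigma>\<in>perms n. \<Sum>r\<in>strs n. \<Sum>b\<in>Bs. query_mass n m U ch \<sigma> (walk_from \<sigma> (\<sigma> r) b) t (hh \<sigma> r))"
    by (simp add: card_bool_lists sum_distrib_left)
  also have "\<dots> \<le> 2 ^ k * (\<Sum>\<sigma>\<in>perms n. 2 ^ n + 2 ^ K * real (card {r \<in> strs n. \<not> short_walks_inj \<sigma> (\<sigma> r) L}))"
    using L_eq by (intro mult_left_mono sum_mono sum_query_mass_walk_start_le[OF n_pos V perms_permutes t _ h]) auto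
  also have "\<dots> = 2 ^ k * (2 ^ n * real (card (perms n))
      + 2 ^ K * (\<Sum>\<sigma>\<in>perms n. real (card {r \<in> strs n. \<not> short_walks_inj \<sigma> (\<sigma> r) L})))"
    by (simp add: sum.distrib sum_distrib_left)
  also have "\<dots> \<le> 2 ^ k * (2 ^ n * real (card (perms n)) + 2 ^ K * (2 ^ n * collision_bound n L * real (card (perms n))))"
    using sum_card_not_short_walks_inj_image_le[OF n_pos L_small] by (intro mult_left_mono add_left_mono) auto
  also have "\<dots> = n_tuples * (1 / 2 ^ K + collision_bound n L)"
    by (simp add: n_tuples_def field_simps)
  finally show ?thesis .
qed

text \<open>Cauchy-Schwarz over all tuples (a, b, r, \<sigma>).\<close>

lemma sum4_sum_sqrt_le:
  assumes nonneg: "\<And>t a b r \<sigma>. 0 \<le> g t a b r \<sigma>"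
    and bound: "\<And>t. t < T \<Longrightarrow> (\<Sum>a\<in>As. \<Sum>b\<in>Bs. \<Sum>r\<in>strs n. \<Sum>\<sigma>\<in>perms n. g t a b r \<sigma>) \<le> n_tuples * B"
  shows "(\<Sum>a\<in>As. \<Sum>b\<in>Bs. \<Sum>r\<in>strs n. \<Sum>\<sigma>\<in>perms n. \<Sum>t<T. sqrt (g t a b r \<sigma>)) \<le> real T * n_tuples * sqrt B"
proof -
  let ?Q = "As \<times> Bs \<times> strs n \<times> perms n"
  let ?g = "\<lambda>t x. g t (fst x) (fst (snd x)) (fst (snd (snd x))) (snd (snd (snd x)))"
  have card_Q: "real (card ?Q) = n_tuples"
    by (simp add: n_tuples_def card_cartesian_product card_bool_lists)
  have "(\<Sum>x\<in>?Q. sqrt (?g t x)) \<le> n_tuples * sqrt B" if "t < T" for t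
  proof -
    have "(\<Sum>x\<in>?Q. sqrt (?g t x)) \<le> sqrt (n_tuples * (\<Sum>x\<in>?Q. ?g t x))"
      using sum_sqrt_le_sqrt_card_mult_sum[of ?Q "?g t", unfolded card_Q] nonneg by blast
    also have "\<dots> \<le> sqrt (n_tuples * (n_tuples * B))"
      using bound[OF that] n_tuples_nonneg unfolding sum4_cartesian
      by (intro real_sqrt_le_mono mult_left_mono) auto
    also have "\<dots> = n_tuples * sqrt B"
      using n_tuples_nonneg by (simp add: real_sqrt_mult mult.assoc[symmetric])
    finally show ?thesis .
  qed
  then have "(\<Sum>t<T. \<Sum>x\<in>?Q. sqrt (?g t x)) \<le> (\<Sum>t<T. n_tuples * sqrt B)"
    by (intro sum_mono) auto
  moreover have "(\<Sum>a\<in>As. \<Sum>b\<in>Bs. \<Sum>r\<in>strs n. \<Sum>\<sigma>\<in>perms n. \<Sum>t<T. sqrt (g t a b r \<sigma>))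
      = (\<Sum>x\<in>?Q. \<Sum>t<T. sqrt (?g t x))"
    by (rule sum4_cartesian)
  ultimately show ?thesis
    using sum.swap[of "\<lambda>x t. sqrt (?g t x)" "{..<T}" ?Q] by simp
qed

lemma sum4_swap_cost_le:
  "(\<Sum>a\<in>As. \<Sum>b\<in>Bs. \<Sum>r\<in>strs n. \<Sum>\<sigma>\<in>perms n. swap_cost n m T U ch \<sigma> a b r)
    \<le> 16 * real T * n_tuples * sqrt (1 / 2 ^ k + collision_bound n L)"
proof -
  define B where "B = 1 / 2 ^ k + collision_bound n L"
  let ?q = "\<lambda>t b r \<sigma>. query_mass n m U ch \<sigma> (walk_from \<sigma> (\<sigma> r) b) t"
  let ?S = "\<lambda>p. (\<Sum>a\<in>As. \<Sum>b\<in>Bs. \<Sum>r\<in>strs n. \<Sum>\<sigma>\<in>perms n. \<Sum>t<T. sqrt (?q t b r \<sigma> (p a r \<sigma>)))"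
  have B_K: "1 / 2 ^ K + collision_bound n L \<le> B"
    unfolding B_def using k_le_K by (simp add: frac_le power_increasing)
  have last: "?S (\<lambda>a r \<sigma>. hh \<sigma> a) \<le> real T * n_tuples * sqrt B"
    if "\<And>\<sigma>. hh \<sigma> = last_input \<sigma> \<or> hh \<sigma> = (\<lambda>a. \<sigma> (last_input \<sigma> a))" for hh
    using that by (intro sum4_sum_sqrt_le) (auto simp: query_mass_nonneg B_def intro!: sum4_query_mass_last_input_le)
  have start: "?S (\<lambda>a r \<sigma>. hh \<sigma> r) \<le> real T * n_tuples * sqrt B"
    if "\<And>\<sigma>. \<sigma> \<in> perms n \<Longrightarrow> bij_betw (hh \<sigma>) (strs n) (strs n)" for hh
    using that
    by (intro sum4_sum_sqrt_le order.trans[OF sum4_query_mass_start_le mult_left_mono[OF B_K n_tuples_nonneg]])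
      (auto simp: query_mass_nonneg)
  have "(\<Sum>a\<in>As. \<Sum>b\<in>Bs. \<Sum>r\<in>strs n. \<Sum>\<sigma>\<in>perms n. swap_cost n m T U ch \<sigma> a b r)
      = 4 * (?S (\<lambda>a r \<sigma>. last_input \<sigma> a) + ?S (\<lambda>a r \<sigma>. r)
           + ?S (\<lambda>a r \<sigma>. \<sigma> (last_input \<sigma> a)) + ?S (\<lambda>a r \<sigma>. \<sigma> r))"
    by (simp add: swap_cost_def Let_def sum.distrib sum_distrib_left mult.left_commute)
  also have "\<dots> \<le> 4 * (4 * (real T * n_tuples * sqrt B))"
    using last[of last_input] start[of "\<lambda>\<sigma>. id"] last[of "\<lambda>\<sigma> a. \<sigma> (last_input \<sigma> a)"] start[of "\<lambda>\<sigma>. \<sigma>"]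
    by (simp add: bij_betw_id permutes_imp_bij perms_permutes)
  finally show ?thesis
    by (simp add: B_def)
qed

lemma sum_split_lists: "(\<Sum>a\<in>As. \<Sum>b\<in>Bs. g (a @ b)) = (\<Sum>bs\<in>{bs :: bool list. length bs = L}. g bs)"
proof -
  have "(\<Sum>a\<in>As. \<Sum>b\<in>Bs. g (a @ b)) = (\<Sum>p\<in>As \<times> Bs. g (fst p @ snd p))"
    by (simp add: sum.cartesian_product split_def)
  also have "\<dots> = (\<Sum>bs\<in>{bs :: bool list. length bs = L}. g bs)"
    by (rule sum.reindex_bij_witness[where i = "\<lambda>bs. (take k bs, drop k bs)" and j = "\<lambda>p. fst p @ snd p"])
      (use L_eq in auto)
  finally show ?thesis .
qed

text \<open>The walk along a @ b continues from \<sigma> (last_input \<sigma> a) along b, so this average is pD.\<close>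

lemma sum4_accept_prob_walk_eq:
  "(\<Sum>a\<in>As. \<Sum>b\<in>Bs. \<Sum>r\<in>strs n. \<Sum>\<sigma>\<in>perms n. acc \<sigma> (walk_from \<sigma> (\<sigma> (last_input \<sigma> a)) b))
    = 2 ^ n * (\<Sum>\<sigma>\<in>perms n. \<Sum>bs\<in>{bs. length bs = L}. acc \<sigma> (walk \<sigma> bs))"
proof -
  have "walk_from \<sigma> (\<sigma> (last_input \<sigma> a)) b = walk \<sigma> (a @ b)" if "a \<in> As" for a b \<sigma>
  proof -
    have "a \<noteq> []"
      using that k_pos by auto
    then show ?thesis
      by (simp add: walk_eq_walk_from walk_from_append walk_from_last_input)
  qed
  then have "(\<Sum>a\<in>As. \<Sum>b\<in>Bs. \<Sum>r\<in>strs n. \<Sum>\<sigma>\<in>perms n. acc \<sigma> (walk_from \<sigma> (\<sigma> (last_input \<sigma> a)) b))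
      = 2 ^ n * (\<Sum>a\<in>As. \<Sum>b\<in>Bs. \<Sum>\<sigma>\<in>perms n. acc \<sigma> (walk \<sigma> (a @ b)))"
    by (simp add: sum_distrib_left)
  also have "\<dots> = 2 ^ n * (\<Sum>bs\<in>{bs. length bs = L}. \<Sum>\<sigma>\<in>perms n. acc \<sigma> (walk \<sigma> bs))"
    using sum_split_lists[of "\<lambda>bs. \<Sum>\<sigma>\<in>perms n. acc \<sigma> (walk \<sigma> bs)"] by simp
  finally show ?thesis
    by (simp add: sum.swap[of _ "perms n"])
qed

text \<open>Walks are bijections, so the walk along b from \<sigma> r is uniform for uniform r:
  this average is pU.\<close>

lemma sum4_accept_prob_start_eq:
  "(\<Sum>a\<in>As. \<Sum>b\<in>Bs. \<Sum>r\<in>strs n. \<Sum>\<sigma>\<in>perms n. acc \<sigma> (walk_from \<sigma> (\<sigma> r) b))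
    = 2 ^ L * (\<Sum>\<sigma>\<in>perms n. \<Sum>y\<in>strs n. acc \<sigma> y)"
proof -
  have uniform: "(\<Sum>r\<in>strs n. acc \<sigma> (walk_from \<sigma> (\<sigma> r) b)) = (\<Sum>y\<in>strs n. acc \<sigma> y)"
    if "\<sigma> \<in> perms n" for \<sigma> b
  proof -
    have "bij_betw ((\<lambda>x. walk_from \<sigma> x b) \<circ> \<sigma>) (strs n) (strs n)"
      using permutes_imp_bij[OF perms_permutes[OF that]] bij_betw_walk_from[OF perms_permutes[OF that] n_pos]
      by (rule bij_betw_trans)
    then show ?thesis
      using sum.reindex_bij_betw[of "(\<lambda>x. walk_from \<sigma> x b) \<circ> \<sigma>" "strs n" "strs n" "acc \<sigma>"] by simp
  qed
  have "(\<Sum>a\<in>As. \<Sum>b\<in>Bs. \<Sum>r\<in>strs n. \<Sum>\<sigma>\<in>perms n. acc \<sigma> (walk_from \<sigma> (\<sigma> r) b))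
      = (\<Sum>\<sigma>\<in>perms n. \<Sum>r\<in>strs n. \<Sum>b\<in>Bs. \<Sum>a\<in>As. acc \<sigma> (walk_from \<sigma> (\<sigma> r) b))"
    by (rule sum4_swap)
  also have "\<dots> = (\<Sum>\<sigma>\<in>perms n. 2 ^ k * (\<Sum>b\<in>Bs. \<Sum>r\<in>strs n. acc \<sigma> (walk_from \<sigma> (\<sigma> r) b)))"
    by (simp add: card_bool_lists sum_distrib_left sum.swap[of _ "strs n"])
  also have "\<dots> = (\<Sum>\<sigma>\<in>perms n. 2 ^ k * 2 ^ K * (\<Sum>y\<in>strs n. acc \<sigma> y))"
    using uniform by (simp add: card_bool_lists mult.assoc)
  also have "\<dots> = 2 ^ L * (\<Sum>\<sigma>\<in>perms n. \<Sum>y\<in>strs n. acc \<sigma> y)"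
    by (simp add: two_pow_L sum_distrib_left)
  finally show ?thesis .
qed

lemma pD_minus_pU_le:
  "pD n L m T U ch Acc - pU n m T U ch Acc
    \<le> 4 * collision_bound n L + 6 * real L / 2 ^ n + 16 * real T * sqrt (1 / 2 ^ k + collision_bound n L)"
proof -
  let ?P = "perms n" and ?\<beta> = "collision_bound n L"
  let ?D = "\<lambda>a b r. (\<Sum>\<sigma>\<in>?P. acc \<sigma> (walk_from \<sigma> (\<sigma> (last_input \<sigma> a)) b))
                     - (\<Sum>\<sigma>\<in>?P. acc \<sigma> (walk_from \<sigma> (\<sigma> r) b))"
  let ?bad = "\<lambda>a b r. real (card {\<sigma> \<in> ?P. \<not> swap_good \<sigma> a b r})"
  define XD where "XD = (\<Sum>\<sigma>\<in>?P. \<Sum>bs\<in>{bs. length bs = L}. acc \<sigma> (walk \<sigma> bs))"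
  define XU where "XU = (\<Sum>\<sigma>\<in>?P. \<Sum>y\<in>strs n. acc \<sigma> y)"
  define cP where "cP = real (card ?P)"
  have cP: "0 < cP"
    using card_perms_pos by (simp add: cP_def)
  have "(\<Sum>a\<in>As. \<Sum>b\<in>Bs. \<Sum>r\<in>strs n. ?D a b r)
      \<le> (\<Sum>a\<in>As. \<Sum>b\<in>Bs. \<Sum>r\<in>strs n. \<Sum>\<sigma>\<in>?P. swap_cost n m T U ch \<sigma> a b r)
        + 2 * (\<Sum>a\<in>As. \<Sum>b\<in>Bs. \<Sum>r\<in>strs n. ?bad a b r)"
    unfolding sum_distrib_left sum.distrib[symmetric]
    by (intro sum_mono abs_le_D1[OF sum_accept_prob_swap_diff_le[OF n_pos V]])
  also have "(\<Sum>a\<in>As. \<Sum>b\<in>Bs. \<Sum>r\<in>strs n. ?bad a b r)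
      \<le> (\<Sum>a\<in>As. \<Sum>b\<in>Bs. cP * (2 * 2 ^ n * ?\<beta> + 3 * real L))"
    unfolding cP_def using k_pos L_eq by (intro sum_mono sum_card_not_swap_good_le[OF n_pos _ _ L_small]) auto
  also have "\<dots> = 2 ^ L * cP * (2 * 2 ^ n * ?\<beta> + 3 * real L)"
    by (simp add: card_bool_lists two_pow_L)
  finally have numerator: "(\<Sum>a\<in>As. \<Sum>b\<in>Bs. \<Sum>r\<in>strs n. ?D a b r)
      \<le> 16 * real T * n_tuples * sqrt (1 / 2 ^ k + ?\<beta>) + 2 * (2 ^ L * cP * (2 * 2 ^ n * ?\<beta> + 3 * real L))"
    using sum4_swap_cost_le by linarith
  have "pD n L m T U ch Acc - pU n m T U ch Acc = (2 ^ n * XD - 2 ^ L * XU) / n_tuples"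
    unfolding pD_def pU_def XD_def[symmetric] XU_def[symmetric] n_tuples_eq cP_def[symmetric]
    using cP by (simp add: field_simps)
  also have "2 ^ n * XD - 2 ^ L * XU = (\<Sum>a\<in>As. \<Sum>b\<in>Bs. \<Sum>r\<in>strs n. ?D a b r)"
    unfolding XD_def XU_def sum4_accept_prob_walk_eq[symmetric] sum4_accept_prob_start_eq[symmetric]
    by (simp add: sum_subtractf)
  also have "\<dots> / n_tuples
      \<le> (16 * real T * n_tuples * sqrt (1 / 2 ^ k + ?\<beta>) + 2 * (2 ^ L * cP * (2 * 2 ^ n * ?\<beta> + 3 * real L)))
          / n_tuples"
    using numerator n_tuples_nonneg by (rule divide_right_mono)
  also have "\<dots> = 4 * ?\<beta> + 6 * real L / 2 ^ n + 16 * real T * sqrt (1 / 2 ^ k + ?\<beta>)"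
    unfolding n_tuples_eq cP_def[symmetric] using cP by (simp add: field_simps)
  finally show ?thesis .
qed

end

lemma pD_minus_pU_le_balanced:
  assumes "0 < n" "valid_alg n m T U" "2 \<le> L" "2 ^ (L + 1) < (2::nat) ^ n"
  shows "pD n L m T U ch Acc - pU n m T U ch Acc
    \<le> 4 * collision_bound n L + 6 * real L / 2 ^ n + 16 * real T * sqrt (1 / 2 ^ (L div 2) + collision_bound n L)"
proof -
  interpret split_walk n m T U ch Acc L "L div 2" "L - L div 2"
    by unfold_locales (use assms in auto)
  show ?thesis
    by (rule pD_minus_pU_le)
qed

section \<open>The numerical bound\<close>

lemma collision_bound_le:
  assumes "L + 2 \<le> n"
  shows "0 \<le> collision_bound n L" and "collision_bound n L \<le> 16 * 4 ^ L / 2 ^ n"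
proof -
  have "(2::real) ^ (L + 2) \<le> 2 ^ n"
    using assms by (intro power_increasing) auto
  then have half: "2 ^ n / 2 \<le> (2::real) ^ n - 2 ^ (L + 1)"
    by simp
  moreover have "0 < (2::real) ^ n / 2"
    by simp
  ultimately have pos: "0 < (2::real) ^ n - 2 ^ (L + 1)"
    by linarith
  then show "0 \<le> collision_bound n L"
    unfolding collision_bound_def by (intro divide_nonneg_pos) auto
  have "collision_bound n L \<le> 2 * 4 ^ (L + 1) / (2 ^ n / 2)"
    unfolding collision_bound_def using half pos by (intro divide_left_mono) auto
  also have "\<dots> = 16 * 4 ^ L / 2 ^ n"
    by (simp add: field_simps)
  finally show "collision_bound n L \<le> 16 * 4 ^ L / 2 ^ n" .
qed

lemma pow_ge_256: "256 \<le> (E::real) \<Longrightarrow> 1 \<le> j \<Longrightarrow> 256 \<le> E ^ j"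
  using power_increasing[of 1 j E] by simp

text \<open>The error terms are estimated through E = 2 powr (L / 8), for which 2 ^ L = E ^ 8 and,
  once 4 L \<le> n, 2 ^ n \<ge> E ^ 32.\<close>

lemma collision_bound_le_root:
  fixes E :: real
  assumes E8: "E ^ 8 = 2 ^ L" and E32: "E ^ 32 \<le> 2 ^ n" and E: "256 \<le> E" and n: "L + 2 \<le> n"
  shows "collision_bound n L \<le> 1 / E ^ 4"
proof -
  have "(4::real) ^ L = (2 ^ L) ^ 2"
    by (simp add: power_mult_distrib[symmetric] power2_eq_square)
  then have four_pow: "(4::real) ^ L = E ^ 16"
    unfolding E8[symmetric] by (simp add: power_mult[symmetric])
  have "collision_bound n L \<le> 16 * E ^ 16 / 2 ^ n"
    using collision_bound_le(2)[OF n] unfolding four_pow .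
  also have "\<dots> \<le> 16 * E ^ 16 / E ^ 32"
    using E32 E by (intro divide_left_mono) auto
  also have "\<dots> = 16 / E ^ 12 * (1 / E ^ 4)"
    using E by (simp add: field_simps flip: power_add)
  also have "\<dots> \<le> 1 * (1 / E ^ 4)"
    using pow_ge_256[OF E, of 12] E by (intro mult_right_mono) auto
  finally show ?thesis
    by simp
qed

lemma length_term_le_root:
  fixes E :: real
  assumes E8: "E ^ 8 = 2 ^ L" and E32: "E ^ 32 \<le> 2 ^ n" and E: "256 \<le> E"
  shows "6 * real L / 2 ^ n \<le> 1 / E ^ 4"
proof -
  have "real L \<le> E ^ 8"
    unfolding E8 by (metis less_exp less_imp_le of_nat_le_iff of_nat_numeral of_nat_power)
  then have "6 * real L / 2 ^ n \<le> 6 * E ^ 8 / E ^ 32"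
    using E32 E by (intro frac_le) auto
  also have "\<dots> = 6 / E ^ 20 * (1 / E ^ 4)"
    using E by (simp add: field_simps flip: power_add)
  also have "\<dots> \<le> 1 * (1 / E ^ 4)"
    using pow_ge_256[OF E, of 20] E by (intro mult_right_mono) auto
  finally show ?thesis
    by simp
qed

lemma inverse_two_pow_half_le_root:
  fixes E :: real
  assumes E8: "E ^ 8 = 2 ^ L" and E: "0 < E"
  shows "1 / 2 ^ (L div 2) \<le> 2 / E ^ 4"
proof -
  have "(E ^ 4) ^ 2 = 2 ^ L"
    using E8 by (simp flip: power_mult)
  also have "\<dots> \<le> 2 ^ (2 * (L div 2) + 1)"
    by (intro power_increasing) auto
  also have "\<dots> \<le> (2 * 2 ^ (L div 2)) ^ 2"
    by (simp add: power_mult_distrib power_add power_mult[symmetric] mult.commute)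
  finally have "E ^ 4 \<le> 2 * 2 ^ (L div 2)"
    by (rule power2_le_imp_le) simp
  then show ?thesis
    using E by (simp add: field_simps)
qed

lemma error_terms_le_one_third:
  fixes T L n :: nat
  assumes L: "64 \<le> L" and n: "4 * L \<le> n" and T: "real T < 2 powr (1/8 * real L)"
  shows "4 * collision_bound n L + 6 * real L / 2 ^ n
    + 16 * real T * sqrt (1 / 2 ^ (L div 2) + collision_bound n L) \<le> 1/3"
proof -
  define E where "E = 2 powr (1/8 * real L)"
  have E8: "E ^ 8 = 2 ^ L"
    unfolding E_def by (simp add: powr_realpow[symmetric] powr_powr)
  have E: "256 \<le> E"
    using powr_mono[of 8 "1/8 * real L" 2] L by (simp add: E_def)
  have "E ^ 32 = (2 ^ L) ^ 4"
    unfolding E8[symmetric] by (simp add: power_mult[symmetric])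
  also have "\<dots> \<le> (2::real) ^ n"
    using n by (simp add: power_mult[symmetric] mult.commute power_increasing)
  finally have E32: "E ^ 32 \<le> 2 ^ n" .
  have n': "L + 2 \<le> n"
    using L n by linarith
  note \<beta> = collision_bound_le(1)[OF n'] collision_bound_le_root[OF E8 E32 E n']
  have "sqrt (1 / 2 ^ (L div 2) + collision_bound n L) \<le> sqrt ((2 / E ^ 2) ^ 2)"
    using inverse_two_pow_half_le_root[OF E8] \<beta> E
    by (intro real_sqrt_le_mono) (simp add: power_divide flip: power_mult)
  then have "16 * real T * sqrt (1 / 2 ^ (L div 2) + collision_bound n L) \<le> 16 * E * (2 / E ^ 2)"
    using T E \<beta>(1) by (intro mult_mono) (auto simp: E_def)
  also have "\<dots> \<le> 1 / 8"
    using E by (simp add: field_simps power2_eq_square)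
  finally have "16 * real T * sqrt (1 / 2 ^ (L div 2) + collision_bound n L) \<le> 1 / 8" .
  moreover have "1 / E ^ 4 \<le> 1 / 256"
    using pow_ge_256[OF E, of 4] by (intro divide_left_mono) auto
  ultimately show ?thesis
    using \<beta> length_term_le_root[OF E8 E32 E] by linarith
qed

lemma eventually_len_bounds:
  fixes len :: "nat \<Rightarrow> nat"
  assumes "(\<lambda>n. real (len n)) \<in> o(\<lambda>n. real n)" and "filterlim len at_top sequentially"
  shows "\<forall>\<^sub>F n in sequentially. 64 \<le> len n \<and> 4 * len n \<le> n"
proof -
  have "\<forall>\<^sub>F n in sequentially. norm (real (len n)) \<le> 1/4 * norm (real n)"
    using landau_o.smallD[OF assms(1), of "1/4"] by simp
  moreover have "\<forall>\<^sub>F n in sequentially. 64 \<le> len n"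
    using assms(2) unfolding filterlim_at_top by blast
  ultimately show ?thesis
    by eventually_elim (simp; linarith)
qed

theorem theorem1:
  fixes len :: "nat \<Rightarrow> nat"
  assumes "(\<lambda>n. real (len n)) \<in> o(\<lambda>n. real n)"
    and "filterlim len at_top sequentially"
  shows "\<exists>c>0. \<exists>N. \<forall>n\<ge>N. \<forall>m T U ch Acc.
           valid_alg n m T U \<longrightarrow> real T < 2 powr (c * real (len n)) \<longrightarrow>
           \<not> (pD n (len n) m T U ch Acc > 2/3 \<and> 1 - pU n m T U ch Acc > 2/3)"
proof -
  obtain N where N: "\<And>n. n \<ge> N \<Longrightarrow> 64 \<le> len n \<and> 4 * len n \<le> n"
    using eventually_len_bounds[OF assms] unfolding eventually_sequentially by blast
  show ?thesis
  proof (intro exI[of _ "1/8"] conjI exI[of _ N] allI impI)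
    fix n m T U ch Acc
    assume "N \<le> n" and V: "valid_alg n m T U" and T: "real T < 2 powr (1/8 * real (len n))"
    then have L: "64 \<le> len n" "4 * len n \<le> n"
      using N by auto
    have "2 ^ (len n + 1) < (2::nat) ^ n"
      using L by (intro power_strict_increasing) auto
    then have "pD n (len n) m T U ch Acc - pU n m T U ch Acc
        \<le> 4 * collision_bound n (len n) + 6 * real (len n) / 2 ^ n
          + 16 * real T * sqrt (1 / 2 ^ (len n div 2) + collision_bound n (len n))"
      using L by (intro pD_minus_pU_le_balanced[OF _ V]) auto
    also have "\<dots> \<le> 1/3"
      by (rule error_terms_le_one_third[OF L T])
    finally show "\<not> (pD n (len n) m T U ch Acc > 2/3 \<and> 1 - pU n m T U ch Acc > 2/3)"
      by linarith
  qed simp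
qed

end
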